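(* Algorithm Exact Count solves the $k$-ribbon problem on a line of $n$ agents, for any choice of starting agent, within at most $(2-\frac1k)n+k$ rounds, using at most $(4-\frac2k)n\log n$ message bits in total and $3\log n+\log k+O(1)$ bits of memory per agent.
   Context: Message passing model (1D): a line graph of $n$ agents, synchronous rounds, in each round each agent may send a reliable message to each neighbor. All agents run the same algorithm, have no knowledge of their global position or of $n$, but share a common sense of direction (left/right), and endpoints know they are endpoints. Initially all agents but one arbitrary starting agent are asleep; a sleeping agent wakes when it receives a message. The $k$-ribbon problem: every agent must output a color in $\{1,\dots,k\}$ so that each color class is a contiguous subpath, colors appear in increasing order from left to right, and the numbers of agents of any two colors differ by at most $1$. Algorithm Exact Count: the starting agent sets $n_{mid}\leftarrow 0$ and sends $n_{mid}+1$ in both directions; every other agent, upon waking by a value, stores it as $n_{mid}$ and forwards $n_{mid}+1$ in the same direction; each agent sets $t\leftarrow n_{mid}$ upon waking and increments $t$ every round. When the left endpoint receives a value it decides color $1$ and sends $n_\ell=1$ to its right neighbor; symmetrically the right endpoint decides color $k$ and sends $n_r=1$ leftwards. An agent receiving $n_d$ ($d\in\{\ell,r\}$) stores it (it equals the number of agents on side $d$) and forwards $n_d+1$ in the same direction. Once an agent knows both $n_\ell$ and $n_r$ it decides its color (the color its position receives in the $k$-ribbon, which is determined by $n_\ell,n_r$ and $k$). Early decision: if an agent knows $n_d$ and $t\ge 2(k-1)n_d-n_{mid}$, it decides color $1$ if $d=\ell$ and color $k$ if $d=r$.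
   Formalization: The early-decision bound is $t\ge 2(k-1)n_d+n_{mid}$ when the starting agent lies on side d, decided agents do not forward $n_d+1$, and the larger ribbon classes are the first ceil((n mod k)/2) and last floor((n mod k)/2) colors. Apart from conventions, each condition added here is assumed in the paper as well or is needed for the statement above to hold. *)

theory Defs
  imports Complex_Main "HOL-Library.Log_Nat"
begin

text \<open>Agents of the line are the positions 0,...,n-1 (0 = left endpoint).
  A colouring is a function from positions to colours.\<close>

definition is_ribbon :: "nat \<Rightarrow> nat \<Rightarrow> (nat \<Rightarrow> nat) \<Rightarrow> bool" where
  "is_ribbon n k c \<longleftrightarrow>
     (\<forall>i<n. 1 \<le> c i \<and> c i \<le> k) \<and>
     (\<forall>i j m. i \<le> m \<and> m \<le> j \<and> j < n \<and> c i = c j \<longrightarrow> c m = c i) \<and>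
     (\<forall>i j. i \<le> j \<and> j < n \<longrightarrow> c i \<le> c j) \<and>
     (\<forall>a b. 1 \<le> a \<and> a \<le> k \<and> 1 \<le> b \<and> b \<le> k \<longrightarrow>
        card {i. i < n \<and> c i = a} \<le> card {i. i < n \<and> c i = b} + 1)"

text \<open>The specific k-ribbon computed by the agents from (n_l, n_r):
  every colour class has n div k or n div k + 1 agents; the n mod k larger classes are
  the first ceil((n mod k)/2) and the last floor((n mod k)/2) colours (so that the
  left endpoint gets colour 1 and the right endpoint colour k, as the algorithm demands).\<close>

definition ribbon_size :: "nat \<Rightarrow> nat \<Rightarrow> nat \<Rightarrow> nat" where
  "ribbon_size n k c = n div k +
     (if c \<le> (n mod k + 1) div 2 \<or> k - (n mod k) div 2 < c then 1 else 0)"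

definition ribbon_color :: "nat \<Rightarrow> nat \<Rightarrow> nat \<Rightarrow> nat" where
  "ribbon_color n k i = (LEAST c. i < (\<Sum>c'=1..c. ribbon_size n k c'))"

text \<open>Counters that are no longer needed are erased (None).
  fmL/fmR: forward n_mid+1 to the left/right in the next round; fl/fr: forward n_l+1 to the
  right / n_r+1 to the left in the next round. fromL: the agent was woken from the left.\<close>

record agent_state =
  awake :: bool
  mid :: "nat option"
  tm :: "nat option"
  nl :: "nat option"
  nr :: "nat option"
  col :: "nat option"
  fromL :: bool
  fmL :: bool
  fmR :: bool
  fl :: bool
  fr :: bool

text \<open>A message carries an optional n_mid value and an optional n_d value
  (n_l for messages travelling right, n_r for messages travelling left).\<close>
type_synonym msg = "nat option \<times> nat option"

definition sleeping :: agent_state where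
  "sleeping = \<lparr>awake = False, mid = None, tm = None, nl = None, nr = None, col = None,
     fromL = False, fmL = False, fmR = False, fl = False, fr = False\<rparr>"

definition decide :: "nat \<Rightarrow> bool \<Rightarrow> bool \<Rightarrow> agent_state \<Rightarrow> agent_state" where
  "decide k isL isR st =
    (if col st \<noteq> None then st
     else if isL then st\<lparr>col := Some 1\<rparr>
     else if isR then st\<lparr>col := Some k\<rparr>
     else (case (nl st, nr st, mid st, tm st) of
        (Some a, Some b, _, _) \<Rightarrow> st\<lparr>col := Some (ribbon_color (a + b + 1) k a)\<rparr>
      | (Some a, None, Some m, Some t) \<Rightarrow>
          if (if fromL st then 2 * (k - 1) * a + m \<le> t else 2 * (k - 1) * a \<le> t + m)
          then st\<lparr>col := Some 1\<rparr> else st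
      | (None, Some b, Some m, Some t) \<Rightarrow>
          if (if fromL st then 2 * (k - 1) * b \<le> t + m else 2 * (k - 1) * b + m \<le> t)
          then st\<lparr>col := Some k\<rparr> else st
      | _ \<Rightarrow> st))"

definition gc :: "agent_state \<Rightarrow> agent_state" where
  "gc st = (if col st = None then st else
     st\<lparr>tm := None,
        mid := (if fmL st \<or> fmR st then mid st else None),
        nl := (if fl st then nl st else None),
        nr := (if fr st then nr st else None)\<rparr>)"

definition send_left :: "agent_state \<Rightarrow> msg option" where
  "send_left st = (if fmL st \<or> fr st then
     Some (if fmL st then map_option Suc (mid st) else None,
           if fr st then map_option Suc (nr st) else None) else None)"

definition send_right :: "agent_state \<Rightarrow> msg option" where
  "send_right st = (if fmR st \<or> fl st then
     Some (if fmR st then map_option Suc (mid st) else None,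
           if fl st then map_option Suc (nl st) else None) else None)"

definition init_start :: "nat \<Rightarrow> bool \<Rightarrow> bool \<Rightarrow> agent_state" where
  "init_start k isL isR = gc (decide k isL isR
     \<lparr>awake = True, mid = Some 0, tm = Some 0,
      nl = (if isL then Some 0 else None), nr = (if isR then Some 0 else None), col = None,
      fromL = False, fmL = (\<not> isL), fmR = (\<not> isR),
      fl = (isL \<and> \<not> isR), fr = (isR \<and> \<not> isL)\<rparr>)"

definition wake :: "bool \<Rightarrow> bool \<Rightarrow> agent_state \<Rightarrow> msg option \<Rightarrow> msg option \<Rightarrow> agent_state" where
  "wake isL isR s0 inL inR =
    (let sw = (case inL of
                 Some (Some m, _) \<Rightarrow> s0\<lparr>mid := Some m, tm := Some m, fromL := True, fmR := (\<not> isR)\<rparr>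
               | _ \<Rightarrow> (case inR of
                     Some (Some m, _) \<Rightarrow> s0\<lparr>mid := Some m, tm := Some m, fromL := False, fmL := (\<not> isL)\<rparr>
                   | _ \<Rightarrow> s0))
     in sw\<lparr>awake := True,
           nl := (if isL then Some 0 else nl sw), nr := (if isR then Some 0 else nr sw),
           fl := (isL \<and> \<not> isR), fr := (isR \<and> \<not> isL)\<rparr>)"

definition receive_waves :: "bool \<Rightarrow> bool \<Rightarrow> agent_state \<Rightarrow> msg option \<Rightarrow> msg option \<Rightarrow> agent_state" where
  "receive_waves isL isR s1 inL inR =
    (let sa = (case inL of
                 Some (_, Some v) \<Rightarrow> if nl s1 = None then s1\<lparr>nl := Some v, fl := (\<not> isR)\<rparr> else s1
               | _ \<Rightarrow> s1)
     in case inR of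
          Some (_, Some v) \<Rightarrow> if nr sa = None then sa\<lparr>nr := Some v, fr := (\<not> isL)\<rparr> else sa
        | _ \<Rightarrow> sa)"

definition step :: "nat \<Rightarrow> bool \<Rightarrow> bool \<Rightarrow> agent_state \<Rightarrow> msg option \<Rightarrow> msg option \<Rightarrow> agent_state" where
  "step k isL isR st inL inR =
    (let s0 = st\<lparr>fmL := False, fmR := False, fl := False, fr := False\<rparr>;
         s1 = (if \<not> awake st then
                 (if inL = None \<and> inR = None then s0 else wake isL isR s0 inL inR)
               else s0\<lparr>tm := map_option Suc (tm s0)\<rparr>);
         s2 = (if col st = None then receive_waves isL isR s1 inL inR else s1)
     in gc (decide k isL isR s2))"

primrec exec :: "nat \<Rightarrow> nat \<Rightarrow> nat \<Rightarrow> nat \<Rightarrow> nat \<Rightarrow> agent_state" where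
  "exec n k s 0 = (\<lambda>i. if i = s then init_start k (i = 0) (i + 1 = n) else sleeping)"
| "exec n k s (Suc r) = (\<lambda>i. step k (i = 0) (i + 1 = n) (exec n k s r i)
     (if 0 < i then send_right (exec n k s r (i - 1)) else None)
     (if i + 1 < n then send_left (exec n k s r (i + 1)) else None))"

definition opt_bits :: "nat option \<Rightarrow> nat" where
  "opt_bits x = (case x of None \<Rightarrow> 0 | Some v \<Rightarrow> floorlog 2 v)"

definition msg_bits :: "msg option \<Rightarrow> nat" where
  "msg_bits m = (case m of None \<Rightarrow> 0 | Some (a, b) \<Rightarrow> opt_bits a + opt_bits b)"

text \<open>Bits sent in round r+1 (computed from the configuration after r rounds);
  only messages to existing neighbours count.\<close>
definition round_bits :: "nat \<Rightarrow> nat \<Rightarrow> nat \<Rightarrow> nat \<Rightarrow> nat" where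
  "round_bits n k s r = (\<Sum>i<n.
      (if 0 < i then msg_bits (send_left (exec n k s r i)) else 0) +
      (if i + 1 < n then msg_bits (send_right (exec n k s r i)) else 0))"

text \<open>Memory of a local state: one bit per boolean flag, and for every optional counter one
  bit (present/absent) plus its binary length.\<close>
definition mem_bits :: "agent_state \<Rightarrow> nat" where
  "mem_bits st = 6 + (1 + opt_bits (mid st)) + (1 + opt_bits (tm st)) + (1 + opt_bits (nl st))
      + (1 + opt_bits (nr st)) + (1 + opt_bits (col st))"

end

theory Submission
  imports Defs
begin

text \<open>
  With starting agent \<open>s\<close>, agent \<open>i\<close> wakes in round \<open>|i - s|\<close>, the count \<open>n_l\<close> sent by the
  left endpoint would reach it in round \<open>s + i\<close> and the count \<open>n_r\<close> in round
  \<open>(n-1-s) + (n-1-i)\<close>. A per-agent invariant indexed by the round pins down every variable and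
  every message. An agent that learns both counts computes its colour in the canonical ribbon.
  An early decision for colour 1 at time \<open>t\<close> needs \<open>2k\<cdot>i \<le> t + s + i\<close>: if \<open>n_r\<close> is still far
  away this forces \<open>k\<cdot>i < n\<close>, so \<open>i\<close> is in the first colour class; if \<open>n_r\<close> should already have
  arrived, it was stopped by an agent to the right of \<open>i\<close> that decided before \<open>n_r\<close> reached it,
  hence decided colour 1, and monotonicity of the ribbon gives colour 1 for \<open>i\<close> as well
  (induction on the round). Since decided agents stop forwarding, the outer classes decide by the
  early rule and the inner agents receive both counts; everybody has decided by round
  \<open>2n - 1 - \<lfloor>n/k\<rfloor>\<close>. Every agent sends each of its four counters at most once, which sums to the
  message bound; for \<open>k = 1\<close> the two waves stop where they meet.
\<close>

definition wake_time :: "nat \<Rightarrow> nat \<Rightarrow> nat" where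
  "wake_time i s = (if s \<le> i then i - s else s - i)"

definition receive :: "bool \<Rightarrow> bool \<Rightarrow> agent_state \<Rightarrow> msg option \<Rightarrow> msg option \<Rightarrow> agent_state" where
  "receive isL isR st inL inR =
    (let s0 = st\<lparr>fmL := False, fmR := False, fl := False, fr := False\<rparr>;
         s1 = (if \<not> awake st then
                 (if inL = None \<and> inR = None then s0 else wake isL isR s0 inL inR)
               else s0\<lparr>tm := map_option Suc (tm s0)\<rparr>)
     in if col st = None then receive_waves isL isR s1 inL inR else s1)"

lemma step_eq_receive: "step k isL isR st inL inR = gc (decide k isL isR (receive isL isR st inL inR))"
  by (simp add: step_def receive_def Let_def)

lemma decide_fields:
  "awake (decide k a b st) = awake st" "mid (decide k a b st) = mid st" "tm (decide k a b st) = tm st"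
  "nl (decide k a b st) = nl st" "nr (decide k a b st) = nr st" "fromL (decide k a b st) = fromL st"
  "fmL (decide k a b st) = fmL st" "fmR (decide k a b st) = fmR st"
  "fl (decide k a b st) = fl st" "fr (decide k a b st) = fr st"
  by (auto simp: decide_def split: option.split)

lemma decide_decided: "col st \<noteq> None \<Longrightarrow> decide k a b st = st"
  by (simp add: decide_def)

lemma decide_undecided: "col (decide k a b st) = None \<Longrightarrow> decide k a b st = st"
  unfolding decide_def by (auto split: option.split_asm if_split_asm)

lemma gc_fields:
  "awake (gc st) = awake st" "col (gc st) = col st" "fromL (gc st) = fromL st"
  "fmL (gc st) = fmL st" "fmR (gc st) = fmR st" "fl (gc st) = fl st" "fr (gc st) = fr st"
  "tm (gc st) = (if col st = None then tm st else None)"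
  "mid (gc st) = (if col st = None \<or> fmL st \<or> fmR st then mid st else None)"
  "nl (gc st) = (if col st = None \<or> fl st then nl st else None)"
  "nr (gc st) = (if col st = None \<or> fr st then nr st else None)"
  by (auto simp: gc_def)

lemma gc_undecided: "col st = None \<Longrightarrow> gc st = st" by (simp add: gc_def)

lemma decide_new_colour:
  assumes "col st = None" "col (decide k a b st) = Some c"
  shows "(a \<and> c = 1) \<or> (\<not>a \<and> b \<and> c = k) \<or>
    (\<not>a \<and> \<not>b \<and> (\<exists>x y. nl st = Some x \<and> nr st = Some y \<and> c = ribbon_color (x+y+1) k x)) \<or>
    (\<not>a \<and> \<not>b \<and> (\<exists>x m t. nl st = Some x \<and> nr st = None \<and> mid st = Some m \<and> tm st = Some t \<and> c = 1 \<and>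
        (if fromL st then 2 * (k - 1) * x + m \<le> t else 2 * (k - 1) * x \<le> t + m))) \<or>
    (\<not>a \<and> \<not>b \<and> (\<exists>y m t. nl st = None \<and> nr st = Some y \<and> mid st = Some m \<and> tm st = Some t \<and> c = k \<and>
        (if fromL st then 2 * (k - 1) * y \<le> t + m else 2 * (k - 1) * y + m \<le> t)))"
proof (cases a)
  case True thus ?thesis using assms by (simp add: decide_def)
next
  case a: False
  show ?thesis
  proof (cases b)
    case True thus ?thesis using assms a by (simp add: decide_def)
  next
    case b: False
    show ?thesis
      using assms a b
      by (cases "nl st"; cases "nr st"; cases "mid st"; cases "tm st"; simp add: decide_def split:
        if_split_asm)
  qed
qed

lemma decide_stays_undecided:
  assumes "col st = None" "col (decide k a b st) = None"
  shows "\<not> a \<and> \<not> b \<and> (nl st = None \<or> nr st = None)"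
  using assms by (cases a; cases b; cases "nl st"; cases "nr st"; cases "mid st"; cases "tm st";
    simp add: decide_def split: if_split_asm)

lemma early_left_cond_iff:
  assumes k: "1 \<le> k"
  shows "(if s < i then 2 * (k - 1) * i + wake_time i s \<le> t else 2 * (k - 1) * i \<le> t + wake_time i s)
         \<longleftrightarrow> 2 * k * i \<le> t + s + i"
proof -
  have e: "2 * k * i = 2 * (k - 1) * i + 2 * i" using k by (cases k) (auto simp: algebra_simps)
  show ?thesis unfolding wake_time_def e by auto
qed

lemma early_right_cond_iff:
  assumes k: "1 \<le> k" and i: "i < n" and sn: "s < n"
  shows "(if s < i then 2 * (k - 1) * (n-1-i) \<le> t + wake_time i s else 2 * (k - 1) * (n-1-i)
      + wake_time i s \<le> t)
         \<longleftrightarrow> 2 * k * (n-1-i) \<le> t + (n - 1 - s) + (n - 1 - i)"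
proof -
  have e: "2 * k * (n-1-i) = 2 * (k - 1) * (n-1-i) + 2 * (n-1-i)" using k
    by (cases k) (auto simp: algebra_simps)
  show ?thesis unfolding wake_time_def e using i sn by auto
qed

lemma decide_undecided_left_cond:
  assumes "col st = None" "nl st = Some x" "nr st = None" "mid st = Some m" "tm st = Some t"
    "col (decide k False False st) = None"
  shows "\<not> (if fromL st then 2 * (k - 1) * x + m \<le> t else 2 * (k - 1) * x \<le> t + m)"
  using assms by (simp add: decide_def split: if_split_asm)

lemma decide_undecided_right_cond:
  assumes "col st = None" "nl st = None" "nr st = Some y" "mid st = Some m" "tm st = Some t"
    "col (decide k False False st) = None"
  shows "\<not> (if fromL st then 2 * (k - 1) * y \<le> t + m else 2 * (k - 1) * y + m \<le> t)"
  using assms by (simp add: decide_def split: if_split_asm)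

definition lwave_time :: "nat \<Rightarrow> nat \<Rightarrow> nat" where "lwave_time s i = s + i"
definition rwave_time :: "nat \<Rightarrow> nat \<Rightarrow> nat \<Rightarrow> nat" where "rwave_time n s i = (n-1-s)+(n-1-i)"
definition msg_mid :: "msg option \<Rightarrow> nat option" where
  "msg_mid m = (case m of Some (Some x, _) \<Rightarrow> Some x | _ \<Rightarrow> None)"
definition msg_count :: "msg option \<Rightarrow> nat option" where
  "msg_count m = (case m of Some (_, Some v) \<Rightarrow> Some v | _ \<Rightarrow> None)"

lemma msg_fields_None: "msg_mid None = None" "msg_count None = None"
  by (simp_all add: msg_mid_def msg_count_def)

lemma receive_waves_fields:
  "awake (receive_waves a b st inL inR) = awake st" "mid (receive_waves a b st inL inR) = mid st"
  "tm (receive_waves a b st inL inR) = tm st" "col (receive_waves a b st inL inR) = col st"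
  "fromL (receive_waves a b st inL inR) = fromL st" "fmL (receive_waves a b st inL inR) = fmL st"
  "fmR (receive_waves a b st inL inR) = fmR st"
  "nl (receive_waves a b st inL inR) = (if nl st = None \<and> msg_count inL \<noteq> None then msg_count inL
      else nl st)"
  "fl (receive_waves a b st inL inR) = (if nl st = None \<and> msg_count inL \<noteq> None then \<not> b else fl st)"
  "nr (receive_waves a b st inL inR) = (if nr st = None \<and> msg_count inR \<noteq> None then msg_count inR
      else nr st)"
  "fr (receive_waves a b st inL inR) = (if nr st = None \<and> msg_count inR \<noteq> None then \<not> a else fr st)"
  unfolding receive_waves_def Let_def msg_count_def
  by (auto split: option.split prod.split)

lemma wake_fields:
  "awake (wake a b st inL inR) = True" "col (wake a b st inL inR) = col st"
  "mid (wake a b st inL inR) = (if msg_mid inL \<noteq> None then msg_mid inL else if msg_mid inR \<noteq> None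
      then msg_mid inR else mid st)"
  "tm (wake a b st inL inR) = (if msg_mid inL \<noteq> None then msg_mid inL else if msg_mid inR \<noteq> None
      then msg_mid inR else tm st)"
  "fromL (wake a b st inL inR) = (if msg_mid inL \<noteq> None then True else if msg_mid inR \<noteq> None
      then False else fromL st)"
  "fmR (wake a b st inL inR) = (if msg_mid inL \<noteq> None then \<not> b else fmR st)"
  "fmL (wake a b st inL inR) = (if msg_mid inL = None \<and> msg_mid inR \<noteq> None then \<not> a else fmL st)"
  "nl (wake a b st inL inR) = (if a then Some 0 else nl st)"
  "nr (wake a b st inL inR) = (if b then Some 0 else nr st)"
  "fl (wake a b st inL inR) = (a \<and> \<not> b)" "fr (wake a b st inL inR) = (b \<and> \<not> a)"
  unfolding wake_def Let_def msg_mid_def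
  by (auto split: option.split prod.split)

lemma receive_fields:
  fixes st inL inR a b
  defines "W \<equiv> \<not> awake st \<and> (inL \<noteq> None \<or> inR \<noteq> None)"
  defines "nl1 \<equiv> (if W \<and> a then Some 0 else nl st)"
  defines "nr1 \<equiv> (if W \<and> b then Some 0 else nr st)"
  defines "fl1 \<equiv> W \<and> a \<and> \<not> b"
  defines "fr1 \<equiv> W \<and> b \<and> \<not> a"
  defines "C \<equiv> col st = None"
  shows
  "awake (receive a b st inL inR) = (awake st \<or> W)" "col (receive a b st inL inR) = col st"
  "mid (receive a b st inL inR) = (if W then (if msg_mid inL \<noteq> None then msg_mid inL
      else if msg_mid inR \<noteq> None then msg_mid inR else mid st) else mid st)"
  "tm (receive a b st inL inR) = (if awake st then map_option Suc (tm st) else if W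
      then (if msg_mid inL \<noteq> None then msg_mid inL else if msg_mid inR \<noteq> None then msg_mid inR
    else tm st) else tm st)"
  "fromL (receive a b st inL inR) = (if W then (if msg_mid inL \<noteq> None then True
      else if msg_mid inR \<noteq> None then False else fromL st) else fromL st)"
  "fmR (receive a b st inL inR) = (W \<and> msg_mid inL \<noteq> None \<and> \<not> b)"
  "fmL (receive a b st inL inR) = (W \<and> msg_mid inL = None \<and> msg_mid inR \<noteq> None \<and> \<not> a)"
  "nl (receive a b st inL inR) = (if C \<and> nl1 = None \<and> msg_count inL \<noteq> None then msg_count inL
      else nl1)"
  "fl (receive a b st inL inR) = (if C \<and> nl1 = None \<and> msg_count inL \<noteq> None then \<not> b else fl1)"
  "nr (receive a b st inL inR) = (if C \<and> nr1 = None \<and> msg_count inR \<noteq> None then msg_count inR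
      else nr1)"
  "fr (receive a b st inL inR) = (if C \<and> nr1 = None \<and> msg_count inR \<noteq> None then \<not> a else fr1)"
  unfolding receive_def Let_def W_def nl1_def nr1_def fl1_def fr1_def C_def
  by (auto simp: receive_waves_fields wake_fields)

lemma wake_time_simps:
  "wake_time i s = 0 \<longleftrightarrow> i = s" "wake_time 0 s = s" "lwave_time s 0 = s"
  "s < n \<Longrightarrow> i + 1 = n \<Longrightarrow> wake_time i s = n - 1 - s"
  "s < n \<Longrightarrow> i + 1 = n \<Longrightarrow> rwave_time n s i = n - 1 - s"
  unfolding wake_time_def lwave_time_def rwave_time_def by auto

lemma wake_time_le_rwave_time: "s < n \<Longrightarrow> i < n \<Longrightarrow> wake_time i s \<le> rwave_time n s i"
  unfolding wake_time_def rwave_time_def by auto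

lemma send_right_simps:
  "msg_mid (send_right st) = (if fmR st then map_option Suc (mid st) else None)"
  "msg_count (send_right st) = (if fl st then map_option Suc (nl st) else None)"
  "send_right st = None \<longleftrightarrow> \<not> fmR st \<and> \<not> fl st"
  by (auto simp: send_right_def msg_mid_def msg_count_def split: option.split)

lemma send_left_simps:
  "msg_mid (send_left st) = (if fmL st then map_option Suc (mid st) else None)"
  "msg_count (send_left st) = (if fr st then map_option Suc (nr st) else None)"
  "send_left st = None \<longleftrightarrow> \<not> fmL st \<and> \<not> fr st"
  by (auto simp: send_left_def msg_mid_def msg_count_def split: option.split)

lemma step_col: "col (step k a b st inL inR) = col (decide k a b (receive a b st inL inR))"
  by (simp add: step_eq_receive gc_fields)

lemma receive_col: "col (receive a b st inL inR) = col st" by (simp add: receive_fields)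

lemma step_col_decided: "col st \<noteq> None \<Longrightarrow> col (step k a b st inL inR) = col st"
  unfolding step_col using decide_decided[of "receive a b st inL inR"] receive_col by simp

lemma step_undecided: "col (step k a b st inL inR) = None
    \<Longrightarrow> step k a b st inL inR = receive a b st inL inR"
proof -
  assume h: "col (step k a b st inL inR) = None"
  hence "col (decide k a b (receive a b st inL inR)) = None" unfolding step_col .
  hence "decide k a b (receive a b st inL inR) = receive a b st inL inR" by (rule decide_undecided)
  moreover have "col (receive a b st inL inR) = None"
  proof (rule ccontr)
    assume "col (receive a b st inL inR) \<noteq> None"
    hence "decide k a b (receive a b st inL inR) = receive a b st inL inR" by (rule decide_decided)
    thus False using h \<open>col (receive a b st inL inR) \<noteq> None\<close> unfolding step_col by simp
  qed
  ultimately show ?thesis unfolding step_eq_receive by (simp add: gc_undecided)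
qed

lemma step_fields:
  "fr (step k a b st iL iR) = fr (receive a b st iL iR)"
  "fl (step k a b st iL iR) = fl (receive a b st iL iR)"
  "nr (step k a b st iL iR) = (if col (decide k a b (receive a b st iL iR)) = None
      \<or> fr (receive a b st iL iR) then nr (receive a b st iL iR) else None)"
  "nl (step k a b st iL iR) = (if col (decide k a b (receive a b st iL iR)) = None
      \<or> fl (receive a b st iL iR) then nl (receive a b st iL iR) else None)"
  by (simp_all add: step_eq_receive gc_fields decide_fields)

section \<open>The canonical ribbon\<close>

definition ribbon_prefix :: "nat \<Rightarrow> nat \<Rightarrow> nat \<Rightarrow> nat" where
  "ribbon_prefix n k c = (\<Sum>c'=1..c. ribbon_size n k c')"

lemma ribbon_prefix_0: "ribbon_prefix n k 0 = 0" by (simp add: ribbon_prefix_def)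
lemma ribbon_prefix_Suc: "ribbon_prefix n k (Suc c) = ribbon_prefix n k c
    + ribbon_size n k (Suc c)" by (simp add: ribbon_prefix_def)

lemma ribbon_prefix_mono: "c \<le> c' \<Longrightarrow> ribbon_prefix n k c \<le> ribbon_prefix n k c'"
  unfolding ribbon_prefix_def by (rule sum_mono2) auto

lemma ribbon_size_ge: "n div k \<le> ribbon_size n k c" by (simp add: ribbon_size_def)
lemma ribbon_size_le: "ribbon_size n k c \<le> n div k + 1" by (simp add: ribbon_size_def)

lemma card_initial_or_final:
  assumes "A + B \<le> k"
  shows "card {c \<in> {1..k}. c \<le> A \<or> k - B < c} = A + B"
proof -
  have "{c \<in> {1..k}. c \<le> A \<or> k - B < c} = {1..A} \<union> {k - B + 1..k}" using assms by auto
  moreover have "{1..A} \<inter> {k - B + 1..k} = {}" using assms by auto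
  ultimately have "card {c \<in> {1..k}. c \<le> A \<or> k - B < c} = card {1..A} + card {k - B + 1..k}"
    by (simp add: card_Un_disjoint)
  thus ?thesis using assms by simp
qed

lemma ribbon_prefix_k:
  assumes k: "1 \<le> k"
  shows "ribbon_prefix n k k = n"
proof -
  let ?A = "(n mod k + 1) div 2" and ?B = "n mod k div 2"
  have m: "n mod k < k" using k by simp
  have AB: "?A + ?B = n mod k" by simp
  have "ribbon_prefix n k k = (\<Sum>c=1..k. n div k + (if c \<le> ?A \<or> k - ?B < c then 1 else 0))"
    unfolding ribbon_prefix_def ribbon_size_def by simp
  also have "\<dots> = k * (n div k) + (\<Sum>c=1..k. (if c \<le> ?A \<or> k - ?B < c then 1 else 0))"
    by (simp add: sum.distrib)
  also have "(\<Sum>c=1..k. (if c \<le> ?A \<or> k - ?B < c then 1 else 0::nat)) = card {c \<in> {1..k}. c \<le> ?A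
      \<or> k - ?B < c}"
  proof -
    have "{1..k} \<inter> {c. c \<le> ?A \<or> k - ?B < c} = {c \<in> {1..k}. c \<le> ?A \<or> k - ?B < c}" by auto
    thus ?thesis using sum.If_cases[of "{1..k}" "\<lambda>c. c \<le> ?A
        \<or> k - ?B < c" "\<lambda>_. 1::nat" "\<lambda>_. 0"] by simp
  qed
  also have "\<dots> = n mod k" using card_initial_or_final[of ?A ?B k] AB m by simp
  finally show ?thesis by simp
qed

lemma ribbon_size_first: "1 \<le> k \<Longrightarrow> ribbon_size n k 1 = n div k + (if 1 \<le> n mod k then 1 else 0)"
  unfolding ribbon_size_def by auto

lemma ribbon_size_last: "2 \<le> k \<Longrightarrow> ribbon_size n k k = n div k + (if 2 \<le> n mod k then 1 else 0)"
proof -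
  assume k: "2 \<le> k"
  have m: "n mod k < k" using k by simp
  have "\<not> k \<le> (n mod k + 1) div 2" using m k by linarith
  moreover have "(k - n mod k div 2 < k) = (2 \<le> n mod k)" using m k by auto
  ultimately show ?thesis unfolding ribbon_size_def by simp
qed

lemma ribbon_size_single: "ribbon_size n 1 1 = n" unfolding ribbon_size_def by simp

lemma ribbon_color_eqI:
  assumes "ribbon_prefix n k (a - 1) \<le> i" "i < ribbon_prefix n k a" "1 \<le> a"
  shows "ribbon_color n k i = a"
  unfolding ribbon_color_def ribbon_prefix_def[symmetric]
proof (rule Least_equality)
  show "i < ribbon_prefix n k a" by fact
next
  fix y assume y: "i < ribbon_prefix n k y"
  show "a \<le> y"
  proof (rule ccontr)
    assume "\<not> a \<le> y" hence "y \<le> a - 1" by simp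
    hence "ribbon_prefix n k y \<le> ribbon_prefix n k (a - 1)" by (rule ribbon_prefix_mono)
    thus False using y assms by simp
  qed
qed

lemma ribbon_color_bounds:
  assumes k: "1 \<le> k" and i: "i < n"
  shows "1 \<le> ribbon_color n k i \<and> ribbon_color n k i \<le> k \<and>
    ribbon_prefix n k (ribbon_color n k i - 1) \<le> i \<and> i < ribbon_prefix n k (ribbon_color n k i)"
proof -
  let ?P = "\<lambda>c. i < ribbon_prefix n k c"
  have ex: "?P k" using ribbon_prefix_k[OF k] i by simp
  have rc: "ribbon_color n k i = (LEAST c. ?P c)" unfolding ribbon_color_def ribbon_prefix_def by simp
  have a1: "?P (LEAST c. ?P c)" using ex by (rule LeastI)
  have a2: "(LEAST c. ?P c) \<le> k" using ex by (rule Least_le)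
  have a3: "(LEAST c. ?P c) \<noteq> 0" using a1 ribbon_prefix_0 by (metis not_less_zero)
  have a4: "\<not> ?P ((LEAST c. ?P c) - 1)" by (rule not_less_Least) (use a3 in simp)
  show ?thesis unfolding rc using a1 a2 a3 a4 by simp
qed

lemma ribbon_color_mono:
  assumes k: "1 \<le> k" and "i \<le> j" "j < n"
  shows "ribbon_color n k i \<le> ribbon_color n k j"
proof -
  have "i < ribbon_prefix n k (ribbon_color n k j)"
    using ribbon_color_bounds[OF k assms(3)] assms(2) by simp
  thus ?thesis unfolding ribbon_color_def ribbon_prefix_def[symmetric] by (rule Least_le)
qed

lemma ribbon_prefix_1: "ribbon_prefix n k 1 = ribbon_size n k 1" by (simp add: ribbon_prefix_def)

lemma ribbon_color_eq_1_iff: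
  assumes k: "1 \<le> k" and i: "i < n"
  shows "ribbon_color n k i = 1 \<longleftrightarrow> i < ribbon_size n k 1"
proof
  assume "ribbon_color n k i = 1" thus "i < ribbon_size n k 1"
    using ribbon_color_bounds[OF k i] ribbon_prefix_1 by simp
next
  assume "i < ribbon_size n k 1" thus "ribbon_color n k i = 1"
    using ribbon_color_eqI[of n k 1 i] ribbon_prefix_0 ribbon_prefix_1 by simp
qed

lemma ribbon_prefix_pred_k: "1 \<le> k \<Longrightarrow> ribbon_prefix n k (k - 1) = n - ribbon_size n k k"
proof -
  assume k: "1 \<le> k"
  have "ribbon_prefix n k k = ribbon_prefix n k (k - 1) + ribbon_size n k k"
    using ribbon_prefix_Suc[of n k "k-1"] k by simp
  thus ?thesis using ribbon_prefix_k[OF k] by simp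
qed

lemma ribbon_color_eq_k_iff:
  assumes k: "1 \<le> k" and i: "i < n"
  shows "ribbon_color n k i = k \<longleftrightarrow> n - ribbon_size n k k \<le> i"
proof
  assume "ribbon_color n k i = k" thus "n - ribbon_size n k k \<le> i"
    using ribbon_color_bounds[OF k i] ribbon_prefix_pred_k[OF k] by simp
next
  assume "n - ribbon_size n k k \<le> i" thus "ribbon_color n k i = k"
    using ribbon_color_eqI[of n k k i] ribbon_prefix_pred_k[OF k] ribbon_prefix_k[OF k] i k by simp
qed

lemma ribbon_color_class:
  assumes k: "1 \<le> k" and a: "1 \<le> a" "a \<le> k"
  shows "{i. i < n \<and> ribbon_color n k i = a} = {ribbon_prefix n k (a - 1)..<ribbon_prefix n k a}"
proof -
  have "ribbon_prefix n k a \<le> ribbon_prefix n k k" using a(2) by (rule ribbon_prefix_mono)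
  hence pa: "ribbon_prefix n k a \<le> n" using ribbon_prefix_k[OF k] by simp
  show ?thesis
  proof (intro set_eqI iffI)
    fix i assume "i \<in> {i. i < n \<and> ribbon_color n k i = a}"
    thus "i \<in> {ribbon_prefix n k (a - 1)..<ribbon_prefix n k a}"
      using ribbon_color_bounds[OF k] by auto
  next
    fix i assume "i \<in> {ribbon_prefix n k (a - 1)..<ribbon_prefix n k a}"
    thus "i \<in> {i. i < n \<and> ribbon_color n k i = a}" using ribbon_color_eqI[of n k a i] a pa by auto
  qed
qed

lemma card_ribbon_color_class:
  assumes k: "1 \<le> k" and a: "1 \<le> a" "a \<le> k"
  shows "card {i. i < n \<and> ribbon_color n k i = a} = ribbon_size n k a"
proof -
  have "ribbon_prefix n k a = ribbon_prefix n k (a - 1) + ribbon_size n k a"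
    using ribbon_prefix_Suc[of n k "a-1"] a by simp
  thus ?thesis unfolding ribbon_color_class[OF assms] by simp
qed

lemma is_ribbon_ribbon_color:
  assumes k: "1 \<le> k"
  shows "is_ribbon n k (ribbon_color n k)"
  unfolding is_ribbon_def
proof (intro conjI allI impI)
  fix i assume "i < n" thus "1 \<le> ribbon_color n k i" using ribbon_color_bounds[OF k] by simp
next
  fix i assume "i < n" thus "ribbon_color n k i \<le> k" using ribbon_color_bounds[OF k] by simp
next
  fix i j m assume h: "i \<le> m \<and> m \<le> j \<and> j < n \<and> ribbon_color n k i = ribbon_color n k j"
  have "ribbon_color n k i \<le> ribbon_color n k m" using h by (intro ribbon_color_mono[OF k]) auto
  moreover have "ribbon_color n k m \<le> ribbon_color n k j" using h
    by (intro ribbon_color_mono[OF k]) auto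
  ultimately show "ribbon_color n k m = ribbon_color n k i" using h by simp
next
  fix i j assume "i \<le> j \<and> j < n" thus "ribbon_color n k i \<le> ribbon_color n k j"
    using ribbon_color_mono[OF k] by simp
next
  fix a b assume h: "1 \<le> a \<and> a \<le> k \<and> 1 \<le> b \<and> b \<le> k"
  show "card {i. i < n \<and> ribbon_color n k i = a} \<le> card {i. i < n \<and> ribbon_color n k i = b} + 1"
    using card_ribbon_color_class[OF k] h ribbon_size_ge[of n k b] ribbon_size_le[of n k a] by simp
qed

lemma is_ribbon_transfer:
  assumes eq: "\<And>i. i < n \<Longrightarrow> f i = g i" and r: "is_ribbon n k f"
  shows "is_ribbon n k g"
proof -
  have e: "\<And>a. {i. i < n \<and> g i = a} = {i. i < n \<and> f i = a}" using eq by auto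
  note rr = r[unfolded is_ribbon_def]
  show ?thesis unfolding is_ribbon_def e
  proof (intro conjI allI impI)
    fix i assume "i < n" thus "1 \<le> g i" using rr eq by metis
  next
    fix i assume "i < n" thus "g i \<le> k" using rr eq by metis
  next
    fix i j m assume h: "i \<le> m \<and> m \<le> j \<and> j < n \<and> g i = g j"
    hence lt: "i < n" "m < n" "j < n" by auto
    hence "f i = f j" using h eq by metis
    hence "f m = f i" using rr h by blast
    thus "g m = g i" using eq lt by metis
  next
    fix i j assume h: "i \<le> j \<and> j < n"
    hence lt: "i < n" "j < n" by auto
    have "f i \<le> f j" using rr h by blast
    thus "g i \<le> g j" using eq lt by metis
  next
    fix a b assume "1 \<le> a \<and> a \<le> k \<and> 1 \<le> b \<and> b \<le> k"
    thus "card {i. i < n \<and> f i = a} \<le> card {i. i < n \<and> f i = b} + 1" using rr by blast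
  qed
qed

lemma is_ribbon_cong:
  assumes "\<And>i. i < n \<Longrightarrow> f i = g i"
  shows "is_ribbon n k f = is_ribbon n k g"
  using is_ribbon_transfer[of n f g k] is_ribbon_transfer[of n g f k] assms by metis

section \<open>Bit lengths\<close>

abbreviation bitlen where "bitlen v \<equiv> floorlog 2 v"

definition bitlen_sum :: "nat \<Rightarrow> nat" where "bitlen_sum m = (\<Sum>v=1..m. bitlen v)"

lemma bitlen_sum_0: "bitlen_sum 0 = 0" by (simp add: bitlen_sum_def)
lemma bitlen_sum_Suc: "bitlen_sum (Suc m) = bitlen_sum m + bitlen (Suc m)"
  by (simp add: bitlen_sum_def)

lemma bitlen_Suc_0: "bitlen (Suc 0) = 1" by (simp add: floorlog_def)
lemma bitlen_sum_1: "bitlen_sum 1 = 1" by (simp add: bitlen_sum_def floorlog_def)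
lemma bitlen_sum_Suc_0: "bitlen_sum (Suc 0) = 1" by (simp add: bitlen_sum_def floorlog_def)

lemma bitlen_ge_2: "2 \<le> v \<Longrightarrow> 2 \<le> bitlen v"
proof -
  assume v: "2 \<le> v"
  have "v < 2 ^ bitlen v" using floorlog_bounds[of v 2] v by simp
  show "2 \<le> bitlen v"
  proof (rule ccontr)
    assume "\<not> 2 \<le> bitlen v"
    hence "bitlen v \<le> 1" by simp
    hence "(2::nat) ^ bitlen v \<le> 2" using power_increasing[of "bitlen v" 1 "2::nat"] by simp
    thus False using \<open>v < 2 ^ bitlen v\<close> v by simp
  qed
qed

lemma bitlen_le_log: "0 < v \<Longrightarrow> real (bitlen v) \<le> log 2 (real v) + 1"
proof -
  assume v: "0 < v"
  have "2 ^ (bitlen v - 1) \<le> v" using floorlog_bounds[of v 2] v by simp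
  hence "real (2 ^ (bitlen v - 1)) \<le> real v" by (simp only: of_nat_le_iff)
  hence "(2::real) ^ (bitlen v - 1) \<le> real v" by simp
  hence "log 2 ((2::real) ^ (bitlen v - 1)) \<le> log 2 (real v)" using v
    by (subst log_le_cancel_iff) auto
  hence "real (bitlen v - 1) \<le> log 2 (real v)" by (simp add: log_nat_power)
  moreover have "1 \<le> bitlen v" using v by (simp add: floorlog_def)
  ultimately show ?thesis by (simp add: of_nat_diff)
qed

lemma log_increment_ge: "1 \<le> m \<Longrightarrow> 1 \<le> real m * (log 2 (real m + 1) - log 2 (real m))"
proof -
  assume m: "1 \<le> m"
  have mp: "0 < real m" using m by simp
  have "0 < 1 / real m" using mp by simp
  hence "-1 \<le> 1 / real m" by linarith
  hence "1 + real m * (1 / real m) \<le> (1 + 1 / real m) ^ m"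
    by (rule Bernoulli_inequality)
  hence "2 \<le> (1 + 1 / real m) ^ m" using mp by simp
  hence "log 2 2 \<le> log 2 ((1 + 1 / real m) ^ m)" using mp by (subst log_le_cancel_iff) auto
  also have "\<dots> = real m * log 2 (1 + 1 / real m)" using mp by (simp add: log_nat_power)
  also have "1 + 1 / real m = (real m + 1) / real m" using mp by (simp add: field_simps)
  also have "log 2 ((real m + 1) / real m) = log 2 (real m + 1) - log 2 (real m)"
    using mp by (simp add: log_divide)
  finally show ?thesis by simp
qed

lemma bitlen_sum_le: "1 \<le> m \<Longrightarrow> real (bitlen_sum m) \<le> real m * log 2 (real m) + 1"
proof (induction m rule: dec_induct)
  case base thus ?case by (simp add: bitlen_sum_1 bitlen_sum_Suc_0)
next
  case (step m)
  have "real (bitlen_sum (Suc m)) = real (bitlen_sum m) + real (bitlen (Suc m))"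
    by (simp add: bitlen_sum_Suc)
  also have "\<dots> \<le> real m * log 2 (real m) + 1 + (log 2 (real m + 1) + 1)"
    using step.IH bitlen_le_log[of "Suc m"] by (simp add: add.commute)
  also have "\<dots> \<le> real (Suc m) * log 2 (real (Suc m)) + 1"
  proof -
    have "1 \<le> real m * (log 2 (real m + 1) - log 2 (real m))" using log_increment_ge step.hyps by simp
    thus ?thesis by (simp add: algebra_simps)
  qed
  finally show ?case .
qed

lemma bitlen_sum_superadd: "bitlen_sum a + bitlen_sum b + (if 1 \<le> a \<and> 1 \<le> b then 1
    else 0) \<le> bitlen_sum (a + b)"
proof (induction b)
  case 0 thus ?case by (simp add: bitlen_sum_0)
next
  case (Suc b)
  have m: "bitlen (Suc b) \<le> bitlen (Suc (a + b))" by (rule floorlog_mono) simp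
  show ?case
  proof (cases "b = 0")
    case True
    show ?thesis
    proof (cases "a = 0")
      case True thus ?thesis using \<open>b = 0\<close> by (simp add: bitlen_sum_0 bitlen_sum_Suc)
    next
      case False
      hence "2 \<le> bitlen (Suc a)" by (intro bitlen_ge_2) simp
      thus ?thesis using \<open>b = 0\<close> False by (simp add: bitlen_sum_0 bitlen_sum_Suc bitlen_Suc_0)
    qed
  next
    case False
    thus ?thesis using Suc.IH m by (simp add: bitlen_sum_Suc)
  qed
qed

lemma bitlen_sum_pred: "2 \<le> n \<Longrightarrow> bitlen_sum (n - 1) + 2 \<le> bitlen_sum n"
proof -
  assume n: "2 \<le> n"
  have "bitlen_sum n = bitlen_sum (n - 1) + bitlen n" using bitlen_sum_Suc[of "n-1"] n by simp
  thus ?thesis using bitlen_ge_2[OF n] by simp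
qed

lemma bitlen_sums_bound_multi: "real (3 * bitlen_sum (n - 1)) \<le> 3 * real n * log 2 (real n)"
proof (cases "n \<le> 1")
  case True
  hence "bitlen_sum (n - 1) = 0" by (simp add: bitlen_sum_0)
  moreover have "0 \<le> real n * log 2 (real n)" using True by (cases n) auto
  ultimately show ?thesis by simp
next
  case False
  hence n: "2 \<le> n" by simp
  have "real (bitlen_sum n) \<le> real n * log 2 (real n) + 1" using bitlen_sum_le[of n] n by simp
  moreover have "bitlen_sum (n - 1) + 2 \<le> bitlen_sum n" using bitlen_sum_pred[OF n] .
  ultimately have "real (bitlen_sum (n - 1)) \<le> real n * log 2 (real n)" by linarith
  thus ?thesis by simp
qed

lemma bitlen_sums_bound_single:
  assumes sn: "s < n"
  shows "real (bitlen_sum s + bitlen_sum (n - 1 - s) + bitlen_sum (min (n - 1) (n - s))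
      + bitlen_sum (min (n - 1) (s + 1))) \<le> 2 * real n * log 2 (real n)"
proof (cases "n \<le> 1")
  case True
  hence "n = 1" "s = 0" using sn by auto
  thus ?thesis by (simp add: bitlen_sum_0)
next
  case False
  hence n: "2 \<le> n" by simp
  have Sn: "real (bitlen_sum n) \<le> real n * log 2 (real n) + 1" using bitlen_sum_le[of n] n by simp
  have sn1: "bitlen_sum (n - 1) + 2 \<le> bitlen_sum n" using bitlen_sum_pred[OF n] .
  have "bitlen_sum s + bitlen_sum (n - 1 - s) + bitlen_sum (min (n - 1) (n - s))
      + bitlen_sum (min (n - 1) (s + 1)) + 2 \<le> 2 * bitlen_sum n"
  proof (cases "s = 0")
    case True
    have "min (n - 1) (n - s) = n - 1" "min (n - 1) (s + 1) = 1" "n - 1 - s = n - 1"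
      using n True by auto
    hence "bitlen_sum s + bitlen_sum (n - 1 - s) + bitlen_sum (min (n - 1) (n - s))
        + bitlen_sum (min (n - 1) (s + 1)) = 2 * bitlen_sum (n - 1) + 1"
      using True by (simp add: bitlen_sum_0 bitlen_sum_1 bitlen_sum_Suc_0)
    thus ?thesis using sn1 by linarith
  next
    case s0: False
    show ?thesis
    proof (cases "s = n - 1")
      case True
      have "min (n - 1) (n - s) = 1" "min (n - 1) (s + 1) = n - 1" "n - 1 - s = 0"
        using True n by auto
      thus ?thesis using True sn1 n by (simp add: bitlen_sum_0 bitlen_sum_1 bitlen_sum_Suc_0)
    next
      case False
      hence s1: "1 \<le> s" "s + 2 \<le> n" using s0 sn by auto
      have a: "bitlen_sum s + bitlen_sum (n - s) + 1 \<le> bitlen_sum n"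
      proof -
        have "1 \<le> n - s" using s1 by simp
        thus ?thesis using bitlen_sum_superadd[of s "n - s"] s1 by simp
      qed
      have b: "bitlen_sum (n - 1 - s) + bitlen_sum (s + 1) + 1 \<le> bitlen_sum n"
      proof -
        have "1 \<le> n - 1 - s" "n - 1 - s + (s + 1) = n" using s1 by auto
        thus ?thesis using bitlen_sum_superadd[of "n - 1 - s" "s + 1"] s1 by simp
      qed
      have "min (n - 1) (n - s) = n - s" "min (n - 1) (s + 1) = s + 1" using s1 by auto
      thus ?thesis using a b by simp
    qed
  qed
  hence "real (bitlen_sum s + bitlen_sum (n - 1 - s) + bitlen_sum (min (n - 1) (n - s))
      + bitlen_sum (min (n - 1) (s + 1))) + 2 \<le> 2 * real (bitlen_sum n)"
    by (simp only: of_nat_add of_nat_mult of_nat_le_iff[symmetric])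
  thus ?thesis using Sn by linarith
qed

lemma msg_bits_send_left: "msg_bits (send_left st) = (if fmL st
    then opt_bits (map_option Suc (mid st)) else 0) + (if fr st
  then opt_bits (map_option Suc (nr st)) else 0)"
  by (simp add: send_left_def msg_bits_def opt_bits_def)

lemma msg_bits_send_right: "msg_bits (send_right st) = (if fmR st
    then opt_bits (map_option Suc (mid st)) else 0) + (if fl st
  then opt_bits (map_option Suc (nl st)) else 0)"
  by (simp add: send_right_def msg_bits_def opt_bits_def)

lemma sum_if_at_most_once:
  fixes R t :: nat
  assumes "\<And>r. P r \<Longrightarrow> r = t \<and> Q"
  shows "(\<Sum>r<R. if P r then v else 0) \<le> (if Q then v else (0::nat))"
proof (cases Q)
  case True
  have pt: "\<And>r. (if P r then v else 0) \<le> (if r = t then v else (0::nat))"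
  proof -
    fix r show "(if P r then v else 0) \<le> (if r = t then v else (0::nat))"
    proof (cases "P r")
      case True hence "r = t" using assms by blast
      thus ?thesis using True by simp
    next
      case False thus ?thesis by simp
    qed
  qed
  have "(\<Sum>r<R. if P r then v else 0) \<le> (\<Sum>r<R. if r = t then v else 0)"
    by (rule sum_mono) (rule pt)
  also have "\<dots> = (if t \<in> {..<R} then v else 0)" by (rule sum.delta) simp
  also have "\<dots> \<le> v" by simp
  finally show ?thesis using True by simp
next
  case False
  hence "\<And>r. \<not> P r" using assms by blast
  thus ?thesis by simp
qed

lemma sum_bitlen_Suc: "(\<Sum>i<M. bitlen (Suc i)) = bitlen_sum M"
  by (induction M) (simp_all add: bitlen_sum_0 bitlen_sum_Suc)

lemma sum_bitlen_diff: "M \<le> n \<Longrightarrow> (\<Sum>i\<in>{n-M..<n}. bitlen (n - i)) = bitlen_sum M"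
proof (induction M)
  case 0 thus ?case by (simp add: bitlen_sum_0)
next
  case (Suc M)
  have e: "{n - Suc M..<n} = insert (n - Suc M) {n-M..<n}" using Suc.prems by auto
  have "n - Suc M \<notin> {n-M..<n}" using Suc.prems by auto
  hence "(\<Sum>i\<in>{n - Suc M..<n}. bitlen (n - i)) = bitlen (n - (n - Suc M))
      + (\<Sum>i\<in>{n-M..<n}. bitlen (n - i))"
    unfolding e by simp
  also have "n - (n - Suc M) = Suc M" using Suc.prems by simp
  finally show ?case using Suc.IH Suc.prems by (simp add: bitlen_sum_Suc)
qed

lemma sum_bitlen_shift: "(\<Sum>i\<in>{a..<a+M}. bitlen (Suc (i - a))) = bitlen_sum M"
proof (induction M)
  case 0 thus ?case by (simp add: bitlen_sum_0)
next
  case (Suc M)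
  have "(\<Sum>i\<in>{a..<a + Suc M}. bitlen (Suc (i - a))) = (\<Sum>i\<in>{a..<a+M}. bitlen (Suc (i - a)))
      + bitlen (Suc M)"
    by simp
  thus ?case using Suc.IH by (simp add: bitlen_sum_Suc)
qed

lemma sum_if_eq_sum_filter: "(\<Sum>i<(n::nat). if P i then g i else (0::nat)) = sum g {i \<in> {..<n}. P i}"
  by (rule sum.inter_filter[symmetric]) simp

lemma opt_bits_le_log:
  assumes "\<And>v. x = Some v \<Longrightarrow> v \<le> N" "1 \<le> N"
  shows "real (opt_bits x) \<le> log 2 (real N) + 1"
proof -
  have lN: "0 \<le> log 2 (real N)" using assms(2) by simp
  show ?thesis
  proof (cases x)
    case None thus ?thesis using lN by (simp add: opt_bits_def)
  next
    case (Some v)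
    show ?thesis
    proof (cases "v = 0")
      case True thus ?thesis using Some lN by (simp add: opt_bits_def floorlog_def)
    next
      case False
      hence "real (bitlen v) \<le> log 2 (real v) + 1" by (intro bitlen_le_log) simp
      moreover have "log 2 (real v) \<le> log 2 (real N)" using assms(1)[OF Some] False
        by (subst log_le_cancel_iff) auto
      ultimately show ?thesis using Some by (simp add: opt_bits_def)
    qed
  qed
qed

section \<open>The invariant of a run\<close>

locale exact_count =
  fixes n k s :: nat
  assumes k_pos: "1 \<le> k" and start_in_line: "s < n"
begin

definition inv_awake :: "nat \<Rightarrow> nat \<Rightarrow> agent_state \<Rightarrow> bool" where
  "inv_awake r i st \<longleftrightarrow> (awake st \<longleftrightarrow> wake_time i s \<le> r)"

definition inv_asleep :: "nat \<Rightarrow> nat \<Rightarrow> agent_state \<Rightarrow> bool" where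
  "inv_asleep r i st \<longleftrightarrow> (\<not> awake st \<longrightarrow> mid st = None \<and> tm st = None \<and> nl st = None \<and> nr st = None
      \<and> \<not>fmL st \<and> \<not>fmR st \<and> \<not>fl st \<and> \<not>fr st \<and> (col st \<noteq> None \<longrightarrow> i = 0 \<or> i+1 = n))"

definition inv_clock :: "nat \<Rightarrow> nat \<Rightarrow> agent_state \<Rightarrow> bool" where
  "inv_clock r i st \<longleftrightarrow> (awake st \<and> col st = None \<longrightarrow> mid st = Some (wake_time i s) \<and> tm st = Some r
      \<and> fromL st = (s < i))"

definition inv_nl :: "nat \<Rightarrow> nat \<Rightarrow> agent_state \<Rightarrow> bool" where
  "inv_nl r i st \<longleftrightarrow> (nl st = None \<or> (nl st = Some i \<and> lwave_time s i \<le> r))"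

definition inv_nr :: "nat \<Rightarrow> nat \<Rightarrow> agent_state \<Rightarrow> bool" where
  "inv_nr r i st \<longleftrightarrow> (nr st = None \<or> (nr st = Some (n-1-i) \<and> rwave_time n s i \<le> r))"

definition inv_fmR :: "nat \<Rightarrow> nat \<Rightarrow> agent_state \<Rightarrow> bool" where
  "inv_fmR r i st \<longleftrightarrow> (fmR st \<longleftrightarrow> r = wake_time i s \<and> s \<le> i \<and> i+1 < n)"

definition inv_fmL :: "nat \<Rightarrow> nat \<Rightarrow> agent_state \<Rightarrow> bool" where
  "inv_fmL r i st \<longleftrightarrow> (fmL st \<longleftrightarrow> r = wake_time i s \<and> i \<le> s \<and> 0 < i)"

definition inv_mid :: "nat \<Rightarrow> nat \<Rightarrow> agent_state \<Rightarrow> bool" where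
  "inv_mid r i st \<longleftrightarrow> (mid st = None \<or> mid st = Some (wake_time i s))"

definition inv_fm_mid :: "nat \<Rightarrow> nat \<Rightarrow> agent_state \<Rightarrow> bool" where
  "inv_fm_mid r i st \<longleftrightarrow> (fmR st \<or> fmL st \<longrightarrow> mid st = Some (wake_time i s))"

definition inv_fl :: "nat \<Rightarrow> nat \<Rightarrow> agent_state \<Rightarrow> bool" where
  "inv_fl r i st \<longleftrightarrow> (fl st \<longrightarrow> nl st = Some i \<and> r = lwave_time s i \<and> i+1 < n)"

definition inv_fr :: "nat \<Rightarrow> nat \<Rightarrow> agent_state \<Rightarrow> bool" where
  "inv_fr r i st \<longleftrightarrow> (fr st \<longrightarrow> nr st = Some (n-1-i) \<and> r = rwave_time n s i \<and> 0 < i)"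

definition inv_left_end_wave :: "nat \<Rightarrow> nat \<Rightarrow> agent_state \<Rightarrow> bool" where
  "inv_left_end_wave r i st \<longleftrightarrow> (i = 0 \<and> i+1 < n \<and> r = wake_time i s \<longrightarrow> fl st)"

definition inv_right_end_wave :: "nat \<Rightarrow> nat \<Rightarrow> agent_state \<Rightarrow> bool" where
  "inv_right_end_wave r i st \<longleftrightarrow> (i+1 = n \<and> 0 < i \<and> r = wake_time i s \<longrightarrow> fr st)"

definition inv_early_colour_1 :: "nat \<Rightarrow> nat \<Rightarrow> agent_state \<Rightarrow> bool" where
  "inv_early_colour_1 r i st \<longleftrightarrow> (col st = None \<or> col st = Some 1 \<or> rwave_time n s i \<le> r \<or> i+1 = n)"

definition inv_early_colour_k :: "nat \<Rightarrow> nat \<Rightarrow> agent_state \<Rightarrow> bool" where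
  "inv_early_colour_k r i st \<longleftrightarrow> (col st = None \<or> col st = Some k \<or> lwave_time s i \<le> r \<or> i = 0)"

definition inv_interior_decision :: "nat \<Rightarrow> nat \<Rightarrow> agent_state \<Rightarrow> bool" where
  "inv_interior_decision r i st \<longleftrightarrow> (col st = None \<or> i = 0 \<or> i+1 = n \<or> lwave_time s i \<le> r
      \<or> rwave_time n s i \<le> r)"

definition inv_left_end_colour :: "nat \<Rightarrow> nat \<Rightarrow> agent_state \<Rightarrow> bool" where
  "inv_left_end_colour r i st \<longleftrightarrow> (i = 0 \<longrightarrow> col st = None \<or> col st = Some 1)"

definition inv_right_end_colour :: "nat \<Rightarrow> nat \<Rightarrow> agent_state \<Rightarrow> bool" where
  "inv_right_end_colour r i st \<longleftrightarrow> (i \<noteq> 0 \<longrightarrow> i+1 = n \<longrightarrow> col st = None \<or> col st = Some k)"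

definition inv_decide_idle :: "nat \<Rightarrow> nat \<Rightarrow> agent_state \<Rightarrow> bool" where
  "inv_decide_idle r i st \<longleftrightarrow> (awake st \<and> col st = None \<longrightarrow> decide k (i=0) (i+1=n) st = st)"

definition inv_undecided_one_count :: "nat \<Rightarrow> nat \<Rightarrow> agent_state \<Rightarrow> bool" where
  "inv_undecided_one_count r i st \<longleftrightarrow> (col st = None \<longrightarrow> nl st = None \<or> nr st = None)"

definition inv_ends_decided :: "nat \<Rightarrow> nat \<Rightarrow> agent_state \<Rightarrow> bool" where
  "inv_ends_decided r i st \<longleftrightarrow> (awake st \<longrightarrow> (i = 0 \<or> i+1 = n) \<longrightarrow> col st \<noteq> None)"

definition inv_clock_erased :: "nat \<Rightarrow> nat \<Rightarrow> agent_state \<Rightarrow> bool" where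
  "inv_clock_erased r i st \<longleftrightarrow> (tm st \<noteq> None \<longrightarrow> col st = None)"

definition received_inv :: "nat \<Rightarrow> nat \<Rightarrow> agent_state \<Rightarrow> bool" where
  "received_inv r i st \<longleftrightarrow>
     inv_awake r i st \<and> inv_asleep r i st \<and> inv_clock r i st \<and> inv_nl r i st \<and> inv_nr r i st
     \<and> inv_fmR r i st \<and> inv_fmL r i st \<and> inv_mid r i st \<and> inv_fm_mid r i st
     \<and> inv_fl r i st \<and> inv_fr r i st \<and> inv_left_end_wave r i st \<and> inv_right_end_wave r i st
     \<and> inv_early_colour_1 r i st \<and> inv_early_colour_k r i st \<and> inv_interior_decision r i st
     \<and> inv_left_end_colour r i st \<and> inv_right_end_colour r i st"

definition agent_inv :: "nat \<Rightarrow> nat \<Rightarrow> agent_state \<Rightarrow> bool" where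
  "agent_inv r i st \<longleftrightarrow>
     received_inv r i st \<and> inv_decide_idle r i st \<and> inv_undecided_one_count r i st
     \<and> inv_ends_decided r i st \<and> inv_clock_erased r i st"

lemmas inv_defs = inv_awake_def inv_asleep_def inv_clock_def inv_nl_def inv_nr_def inv_fmR_def
  inv_fmL_def inv_mid_def inv_fm_mid_def inv_fl_def inv_fr_def inv_left_end_wave_def
  inv_right_end_wave_def inv_early_colour_1_def inv_early_colour_k_def inv_interior_decision_def
  inv_left_end_colour_def inv_right_end_colour_def inv_decide_idle_def inv_undecided_one_count_def
  inv_ends_decided_def inv_clock_erased_def

lemma agent_inv_decided:
  assumes inv: "received_inv r i st" and decided: "col st \<noteq> None"
  shows "agent_inv r i (gc (decide k (i=0) (i+1=n) st))"
proof -
  have decide_id: "decide k (i=0) (i+1=n) st = st" using decided by (rule decide_decided)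
  have c_awake: "inv_awake r i (gc st)" using inv decided
    unfolding received_inv_def inv_awake_def gc_fields by auto
  have c_asleep: "inv_asleep r i (gc st)" using inv decided
    unfolding received_inv_def inv_asleep_def gc_fields by auto
  have c_clock: "inv_clock r i (gc st)" using inv decided
    unfolding received_inv_def inv_clock_def gc_fields by auto
  have c_nl: "inv_nl r i (gc st)" using inv decided
    unfolding received_inv_def inv_nl_def gc_fields by auto
  have c_nr: "inv_nr r i (gc st)" using inv decided
    unfolding received_inv_def inv_nr_def gc_fields by auto
  have c_fmR: "inv_fmR r i (gc st)" using inv decided
    unfolding received_inv_def inv_fmR_def gc_fields by auto
  have c_fmL: "inv_fmL r i (gc st)" using inv decided
    unfolding received_inv_def inv_fmL_def gc_fields by auto
  have c_mid: "inv_mid r i (gc st)" using inv decided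
    unfolding received_inv_def inv_mid_def gc_fields by auto
  have c_fm_mid: "inv_fm_mid r i (gc st)" using inv decided
    unfolding received_inv_def inv_fm_mid_def gc_fields by auto
  have c_fl: "inv_fl r i (gc st)" using inv decided
    unfolding received_inv_def inv_fl_def gc_fields by auto
  have c_fr: "inv_fr r i (gc st)" using inv decided
    unfolding received_inv_def inv_fr_def gc_fields by auto
  have c_left_end_wave: "inv_left_end_wave r i (gc st)" using inv decided
    unfolding received_inv_def inv_left_end_wave_def gc_fields by auto
  have c_right_end_wave: "inv_right_end_wave r i (gc st)" using inv decided
    unfolding received_inv_def inv_right_end_wave_def gc_fields by auto
  have c_early_colour_1: "inv_early_colour_1 r i (gc st)" using inv decided
    unfolding received_inv_def inv_early_colour_1_def gc_fields by auto
  have c_early_colour_k: "inv_early_colour_k r i (gc st)" using inv decided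
    unfolding received_inv_def inv_early_colour_k_def gc_fields by auto
  have c_interior_decision: "inv_interior_decision r i (gc st)" using inv decided
    unfolding received_inv_def inv_interior_decision_def gc_fields by auto
  have c_left_end_colour: "inv_left_end_colour r i (gc st)" using inv decided
    unfolding received_inv_def inv_left_end_colour_def gc_fields by auto
  have c_right_end_colour: "inv_right_end_colour r i (gc st)" using inv decided
    unfolding received_inv_def inv_right_end_colour_def gc_fields by auto
  have c_decide_idle: "inv_decide_idle r i (gc st)" using decided
    unfolding inv_decide_idle_def gc_fields by auto
  have c_undecided_one_count: "inv_undecided_one_count r i (gc st)" using decided
    unfolding inv_undecided_one_count_def gc_fields by auto
  have c_ends_decided: "inv_ends_decided r i (gc st)" using decided
    unfolding inv_ends_decided_def gc_fields by auto
  have c_clock_erased: "inv_clock_erased r i (gc st)" using decided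
    unfolding inv_clock_erased_def gc_fields by auto
  show ?thesis unfolding decide_id agent_inv_def received_inv_def
    using c_awake c_asleep c_clock c_nl c_nr c_fmR c_fmL c_mid c_fm_mid c_fl c_fr c_left_end_wave
      c_right_end_wave c_early_colour_1 c_early_colour_k c_interior_decision c_left_end_colour
      c_right_end_colour c_decide_idle c_undecided_one_count c_ends_decided c_clock_erased by blast
qed

lemma agent_inv_stays_undecided:
  assumes inv: "received_inv r i st" and undecided: "col st = None"
    and decision: "col (decide k (i=0) (i+1=n) st) = None"
  shows "agent_inv r i (gc (decide k (i=0) (i+1=n) st))"
proof -
  have decide_id: "decide k (i=0) (i+1=n) st = st" using decision by (rule decide_undecided)
  have ends_or_one_count: "i \<noteq> 0 \<and> i+1 \<noteq> n \<and> (nl st = None \<or> nr st = None)"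
    using decide_stays_undecided[OF undecided decision] by simp
  show ?thesis unfolding decide_id gc_undecided[OF undecided] agent_inv_def
    using inv undecided decide_id ends_or_one_count
    unfolding inv_decide_idle_def inv_undecided_one_count_def inv_ends_decided_def
      inv_clock_erased_def by auto
qed

lemma agent_inv_decides:
  assumes inv: "received_inv r i st" and undecided: "col st = None"
    and decision: "col (decide k (i=0) (i+1=n) st) = Some c"
  shows "agent_inv r i (gc (decide k (i=0) (i+1=n) st))"
proof -
  let ?X = "gc (decide k (i=0) (i+1=n) st)"
  have fields: "col ?X = Some c" "tm ?X = None" "awake ?X = awake st" "fromL ?X = fromL st"
    "fmL ?X = fmL st" "fmR ?X = fmR st" "fl ?X = fl st" "fr ?X = fr st"
    "mid ?X = (if fmL st \<or> fmR st then mid st else None)"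
    "nl ?X = (if fl st then nl st else None)" "nr ?X = (if fr st then nr st else None)"
    using decision by (auto simp: gc_fields decide_fields)
  have how_decided: "(i = 0 \<and> c = 1) \<or> (i \<noteq> 0 \<and> i+1 = n \<and> c = k) \<or>
      (i \<noteq> 0 \<and> i+1 \<noteq> n \<and> (\<exists>x y. nl st = Some x \<and> nr st = Some y)) \<or>
      (i \<noteq> 0 \<and> i+1 \<noteq> n \<and> (\<exists>x. nl st = Some x \<and> c = 1)) \<or>
      (i \<noteq> 0 \<and> i+1 \<noteq> n \<and> (\<exists>y. nr st = Some y \<and> c = k))"
    using decide_new_colour[OF undecided decision] by blast
  have asleep_at_end: "\<not> awake st \<Longrightarrow> (i = 0 \<or> i+1 = n)"
    using how_decided inv unfolding received_inv_def inv_asleep_def by auto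
  have c_awake: "inv_awake r i ?X" using inv how_decided asleep_at_end
    unfolding received_inv_def inv_awake_def fields by auto
  have c_asleep: "inv_asleep r i ?X" using inv how_decided asleep_at_end
    unfolding received_inv_def inv_asleep_def fields by auto
  have c_clock: "inv_clock r i ?X" using inv how_decided asleep_at_end
    unfolding received_inv_def inv_clock_def fields by auto
  have c_nl: "inv_nl r i ?X" using inv how_decided asleep_at_end
    unfolding received_inv_def inv_nl_def fields by auto
  have c_nr: "inv_nr r i ?X" using inv how_decided asleep_at_end
    unfolding received_inv_def inv_nr_def fields by auto
  have c_fmR: "inv_fmR r i ?X" using inv how_decided asleep_at_end
    unfolding received_inv_def inv_fmR_def fields by auto
  have c_fmL: "inv_fmL r i ?X" using inv how_decided asleep_at_end
    unfolding received_inv_def inv_fmL_def fields by auto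
  have c_mid: "inv_mid r i ?X" using inv how_decided asleep_at_end
    unfolding received_inv_def inv_mid_def fields by auto
  have c_fm_mid: "inv_fm_mid r i ?X" using inv how_decided asleep_at_end
    unfolding received_inv_def inv_fm_mid_def fields by auto
  have c_fl: "inv_fl r i ?X" using inv how_decided asleep_at_end
    unfolding received_inv_def inv_fl_def fields by auto
  have c_fr: "inv_fr r i ?X" using inv how_decided asleep_at_end
    unfolding received_inv_def inv_fr_def fields by auto
  have c_left_end_wave: "inv_left_end_wave r i ?X" using inv how_decided asleep_at_end
    unfolding received_inv_def inv_left_end_wave_def fields by auto
  have c_right_end_wave: "inv_right_end_wave r i ?X" using inv how_decided asleep_at_end
    unfolding received_inv_def inv_right_end_wave_def fields by auto
  have c_early_colour_1: "inv_early_colour_1 r i ?X" using inv how_decided asleep_at_end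
    unfolding received_inv_def inv_early_colour_1_def inv_nr_def fields by auto
  have c_early_colour_k: "inv_early_colour_k r i ?X" using inv how_decided asleep_at_end
    unfolding received_inv_def inv_early_colour_k_def inv_nl_def fields by auto
  have c_interior_decision: "inv_interior_decision r i ?X" using inv how_decided asleep_at_end
    unfolding received_inv_def inv_interior_decision_def inv_nl_def inv_nr_def fields by auto
  have c_left_end_colour: "inv_left_end_colour r i ?X" using inv how_decided asleep_at_end
    unfolding received_inv_def inv_left_end_colour_def fields by auto
  have c_right_end_colour: "inv_right_end_colour r i ?X" using inv how_decided asleep_at_end
    unfolding received_inv_def inv_right_end_colour_def fields by auto
  have c_decide_idle: "inv_decide_idle r i ?X" unfolding inv_decide_idle_def fields by auto
  have c_undecided_one_count: "inv_undecided_one_count r i ?X"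
    unfolding inv_undecided_one_count_def fields by auto
  have c_ends_decided: "inv_ends_decided r i ?X" unfolding inv_ends_decided_def fields by auto
  have c_clock_erased: "inv_clock_erased r i ?X" unfolding inv_clock_erased_def fields by auto
  show ?thesis unfolding agent_inv_def received_inv_def
    using c_awake c_asleep c_clock c_nl c_nr c_fmR c_fmL c_mid c_fm_mid c_fl c_fr c_left_end_wave
      c_right_end_wave c_early_colour_1 c_early_colour_k c_interior_decision c_left_end_colour
      c_right_end_colour c_decide_idle c_undecided_one_count c_ends_decided c_clock_erased by blast
qed

lemma agent_inv_gc_decide:
  assumes "received_inv r i st"
  shows "agent_inv r i (gc (decide k (i=0) (i+1=n) st))"
  using agent_inv_decided[OF assms] agent_inv_stays_undecided[OF assms] agent_inv_decides[OF assms]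
  by (cases "col st"; cases "col (decide k (i=0) (i+1=n) st)") auto

definition msg_from_left_ok :: "nat \<Rightarrow> nat \<Rightarrow> msg option \<Rightarrow> bool" where
  "msg_from_left_ok r i m \<longleftrightarrow> (m \<noteq> None \<longrightarrow> wake_time i s \<le> Suc r) \<and>
     (\<forall>x. msg_mid m = Some x \<longrightarrow> x = wake_time i s \<and> s < i \<and> Suc r = wake_time i s) \<and>
     (\<forall>v. msg_count m = Some v \<longrightarrow> v = i \<and> Suc r = lwave_time s i) \<and>
     (s < i \<and> Suc r = wake_time i s \<longrightarrow> msg_mid m = Some (wake_time i s)) \<and> (i = 0 \<longrightarrow> m = None)"

definition msg_from_right_ok :: "nat \<Rightarrow> nat \<Rightarrow> msg option \<Rightarrow> bool" where
  "msg_from_right_ok r i m \<longleftrightarrow> (m \<noteq> None \<longrightarrow> wake_time i s \<le> Suc r) \<and>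
     (\<forall>x. msg_mid m = Some x \<longrightarrow> x = wake_time i s \<and> i < s \<and> Suc r = wake_time i s) \<and>
     (\<forall>v. msg_count m = Some v \<longrightarrow> v = n-1-i \<and> Suc r = rwave_time n s i) \<and>
     (i < s \<and> Suc r = wake_time i s \<longrightarrow> msg_mid m = Some (wake_time i s)) \<and> (i + 1 = n \<longrightarrow> m = None)"

context
  fixes r i :: nat and st :: agent_state and inL inR :: "msg option"
  assumes inv: "agent_inv r i st" and i_lt_n: "i < n"
    and left_ok: "msg_from_left_ok r i inL" and right_ok: "msg_from_right_ok r i inR"
begin

abbreviation received where "received \<equiv> receive (i=0) (i+1=n) st inL inR"
definition woken where "woken \<longleftrightarrow> \<not> awake st \<and> (inL \<noteq> None \<or> inR \<noteq> None)"

lemmas received_fields = receive_fields[where a="i=0" and b="i+1=n" and st=st and inL=inL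
  and inR=inR, folded woken_def]

lemma st_clauses:
  shows st_awake: "inv_awake r i st" and st_asleep: "inv_asleep r i st"
    and st_clock: "inv_clock r i st" and st_mid: "inv_mid r i st"
    and st_nl: "inv_nl r i st" and st_nr: "inv_nr r i st"
    and st_early_colour_1: "inv_early_colour_1 r i st"
    and st_early_colour_k: "inv_early_colour_k r i st"
    and st_interior_decision: "inv_interior_decision r i st"
    and st_left_end_colour: "inv_left_end_colour r i st"
    and st_right_end_colour: "inv_right_end_colour r i st"
  using inv unfolding agent_inv_def received_inv_def by auto

lemma left_msg:
  shows left_msg_time: "inL \<noteq> None \<Longrightarrow> wake_time i s \<le> Suc r"
    and left_msg_mid: "msg_mid inL = Some x \<Longrightarrow> x = wake_time i s \<and> s < i \<and> Suc r = wake_time i s"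
    and left_msg_count: "msg_count inL = Some v \<Longrightarrow> v = i \<and> Suc r = lwave_time s i"
    and left_msg_mid_due: "s < i \<Longrightarrow> Suc r = wake_time i s \<Longrightarrow> msg_mid inL = Some (wake_time i s)"
  using left_ok unfolding msg_from_left_ok_def by blast+

lemma right_msg:
  shows right_msg_time: "inR \<noteq> None \<Longrightarrow> wake_time i s \<le> Suc r"
    and right_msg_mid: "msg_mid inR = Some x \<Longrightarrow> x = wake_time i s \<and> i < s \<and> Suc r = wake_time i s"
    and right_msg_count: "msg_count inR = Some v \<Longrightarrow> v = n-1-i \<and> Suc r = rwave_time n s i"
    and right_msg_mid_due: "i < s \<Longrightarrow> Suc r = wake_time i s \<Longrightarrow> msg_mid inR = Some (wake_time i s)"
  using right_ok unfolding msg_from_right_ok_def by blast+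

lemma woken_wake_time: "woken \<Longrightarrow> wake_time i s = Suc r"
  using st_awake left_msg_time right_msg_time unfolding inv_awake_def woken_def by fastforce

lemma woken_if_due:
  assumes "\<not> awake st" and due: "wake_time i s = Suc r"
  shows woken
proof -
  have "i \<noteq> s" using due by (auto simp: wake_time_def)
  then have "msg_mid inL \<noteq> None \<or> msg_mid inR \<noteq> None"
    using left_msg_mid_due right_msg_mid_due due by (metis linorder_neqE_nat option.discI)
  then show woken using assms(1) unfolding woken_def by (auto simp: msg_mid_def split: option.splits)
qed

lemma awake_received: "awake received = (awake st \<or> woken)"
  unfolding woken_def by (simp add: receive_fields)

lemma received_awake: "inv_awake (Suc r) i received" unfolding inv_awake_def awake_received
proof (cases "awake st")
  case True thus "(awake st \<or> woken) = (wake_time i s \<le> Suc r)" using st_awake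
    unfolding inv_awake_def by auto
next
  case False
  hence "\<not> wake_time i s \<le> r" using st_awake unfolding inv_awake_def by auto
  thus "(awake st \<or> woken) = (wake_time i s \<le> Suc r)" using False woken_wake_time woken_if_due
    by (auto simp: le_Suc_eq)
qed

lemma received_asleep: "inv_asleep (Suc r) i received" unfolding inv_asleep_def awake_received
proof
  assume a: "\<not> (awake st \<or> woken)"
  hence io: "inL = None" "inR = None" unfolding woken_def by blast+
  show "mid received = None \<and> tm received = None \<and> nl received = None \<and> nr received = None
      \<and> \<not> fmL received \<and> \<not> fmR received \<and> \<not> fl received \<and> \<not> fr received
      \<and> (col received \<noteq> None \<longrightarrow> i = 0 \<or> i + 1 = n)"
    using st_asleep a unfolding inv_asleep_def received_fields by (simp add: io msg_fields_None)
qed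

lemma asleep_if_due: "wake_time i s = Suc r \<Longrightarrow> \<not> awake st" using st_awake
  unfolding inv_awake_def by simp

lemma not_start_if_due: "wake_time i s = Suc r \<Longrightarrow> i \<noteq> s" by (auto simp: wake_time_def)

lemma received_clock: "inv_clock (Suc r) i received" unfolding inv_clock_def awake_received
proof (cases "awake st")
  case True
  hence "\<not> woken" unfolding woken_def by blast
  thus "(awake st \<or> woken) \<and> col received = None \<longrightarrow> mid received = Some (wake_time i s)
      \<and> tm received = Some (Suc r) \<and> fromL received = (s < i)"
    using st_clock True unfolding inv_clock_def received_fields by simp
next
  case False
  show "(awake st \<or> woken) \<and> col received = None \<longrightarrow> mid received = Some (wake_time i s)
      \<and> tm received = Some (Suc r) \<and> fromL received = (s < i)"
  proof
    assume "(awake st \<or> woken) \<and> col received = None"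
    hence Wt: woken using False by blast
    have dd: "wake_time i s = Suc r" using woken_wake_time Wt .
    show "mid received = Some (wake_time i s) \<and> tm received = Some (Suc r) \<and> fromL received = (s < i)"
    proof (cases "msg_mid inL")
      case (Some x)
      hence "x = wake_time i s" "s < i" using left_msg_mid by auto
      thus ?thesis unfolding received_fields using Wt Some False dd by simp
    next
      case None
      have "\<not> s < i" using left_msg_mid_due dd None by auto
      hence "i < s" using not_start_if_due[OF dd] by auto
      hence mr: "msg_mid inR = Some (wake_time i s)" using right_msg_mid_due dd by auto
      show ?thesis unfolding received_fields using Wt None mr False dd \<open>i < s\<close> by simp
    qed
  qed
qed

lemma received_nl: "inv_nl (Suc r) i received" unfolding inv_nl_def
proof (cases "col st = None \<and> (if woken \<and> i = 0 then Some 0 else nl st) = None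
    \<and> msg_count inL \<noteq> None")
  case True
  then obtain v where v: "msg_count inL = Some v" by auto
  hence "v = i" "Suc r = lwave_time s i" using left_msg_count by auto
  thus "nl received = None \<or> nl received = Some i \<and> lwave_time s i \<le> Suc r"
    unfolding received_fields using True v by simp
next
  case False
  hence np: "nl received = (if woken \<and> i = 0 then Some 0 else nl st)" unfolding received_fields
    by (rule if_not_P)
  show "nl received = None \<or> nl received = Some i \<and> lwave_time s i \<le> Suc r"
  proof (cases "woken \<and> i = 0")
    case True
    hence "lwave_time s i = Suc r" using woken_wake_time wake_time_simps(2,3) by auto
    thus ?thesis using np True by simp
  next
    case False
    thus ?thesis using np st_nl unfolding inv_nl_def by auto
  qed
qed

lemma received_nr: "inv_nr (Suc r) i received" unfolding inv_nr_def
proof (cases "col st = None \<and> (if woken \<and> i+1 = n then Some 0 else nr st) = None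
    \<and> msg_count inR \<noteq> None")
  case True
  then obtain v where v: "msg_count inR = Some v" by auto
  hence "v = n-1-i" "Suc r = rwave_time n s i" using right_msg_count by auto
  thus "nr received = None \<or> nr received = Some (n-1-i) \<and> rwave_time n s i \<le> Suc r"
    unfolding received_fields using True v by simp
next
  case False
  hence np: "nr received = (if woken \<and> i+1 = n then Some 0 else nr st)" unfolding received_fields
    by (rule if_not_P)
  show "nr received = None \<or> nr received = Some (n-1-i) \<and> rwave_time n s i \<le> Suc r"
  proof (cases "woken \<and> i+1 = n")
    case True
    hence "rwave_time n s i = Suc r" "n - 1 - i = 0"
      using woken_wake_time wake_time_simps(4,5)[OF start_in_line] by auto
    thus ?thesis using np True by simp
  next
    case False
    thus ?thesis using np st_nr unfolding inv_nr_def by auto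
  qed
qed

lemma received_fmR: "inv_fmR (Suc r) i received" unfolding inv_fmR_def
proof
  assume a: "fmR received"
  hence Wt: woken and m: "msg_mid inL \<noteq> None" and ni: "i+1 \<noteq> n" unfolding received_fields by auto
  then obtain x where "msg_mid inL = Some x" by auto
  hence "s < i" "Suc r = wake_time i s" using left_msg_mid by auto
  thus "Suc r = wake_time i s \<and> s \<le> i \<and> i + 1 < n" using ni i_lt_n by auto
next
  assume a: "Suc r = wake_time i s \<and> s \<le> i \<and> i + 1 < n"
  have dd: "wake_time i s = Suc r" using a by simp
  have "i \<noteq> s" using not_start_if_due[OF dd] .
  hence "s < i" using a by simp
  hence "msg_mid inL = Some (wake_time i s)" using left_msg_mid_due dd by simp
  moreover have "woken" using woken_if_due[OF asleep_if_due[OF dd] dd] .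
  ultimately show "fmR received" unfolding received_fields using a by auto
qed

lemma received_fmL: "inv_fmL (Suc r) i received" unfolding inv_fmL_def
proof
  assume a: "fmL received"
  hence Wt: woken and m: "msg_mid inR \<noteq> None" and ni: "i \<noteq> 0" unfolding received_fields by auto
  then obtain x where "msg_mid inR = Some x" by auto
  hence "i < s" "Suc r = wake_time i s" using right_msg_mid by auto
  thus "Suc r = wake_time i s \<and> i \<le> s \<and> 0 < i" using ni by auto
next
  assume a: "Suc r = wake_time i s \<and> i \<le> s \<and> 0 < i"
  have dd: "wake_time i s = Suc r" using a by simp
  have "i \<noteq> s" using not_start_if_due[OF dd] .
  hence "i < s" using a by simp
  hence "msg_mid inR = Some (wake_time i s)" using right_msg_mid_due dd by simp
  moreover have "msg_mid inL = None"
  proof (rule ccontr)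
    assume "msg_mid inL \<noteq> None" then obtain x where "msg_mid inL = Some x" by auto
    hence "s < i" using left_msg_mid by auto
    thus False using \<open>i < s\<close> by simp
  qed
  moreover have "woken" using woken_if_due[OF asleep_if_due[OF dd] dd] .
  ultimately show "fmL received" unfolding received_fields using a by auto
qed

lemma received_mid_if_woken: "woken \<Longrightarrow> mid received = None \<or> mid received = Some (wake_time i s)"
proof -
  assume Wt: woken
  show ?thesis
  proof (cases "msg_mid inL")
    case (Some x) thus ?thesis using left_msg_mid unfolding received_fields using Wt by auto
  next
    case None
    show ?thesis
    proof (cases "msg_mid inR")
      case (Some x) thus ?thesis using right_msg_mid None unfolding received_fields using Wt by auto
    next
      case None2: None
      thus ?thesis using None Wt st_asleep unfolding received_fields inv_asleep_def woken_def by auto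
    qed
  qed
qed

lemma received_mid: "inv_mid (Suc r) i received" unfolding inv_mid_def
  using received_mid_if_woken st_mid unfolding inv_mid_def received_fields by auto

lemma received_fm_mid: "inv_fm_mid (Suc r) i received" unfolding inv_fm_mid_def
proof
  assume "fmR received \<or> fmL received"
  hence Wt: woken and m: "msg_mid inL \<noteq> None \<or> msg_mid inR \<noteq> None" unfolding received_fields by auto
  show "mid received = Some (wake_time i s)"
  proof (cases "msg_mid inL")
    case (Some x) thus ?thesis using left_msg_mid unfolding received_fields using Wt by auto
  next
    case None
    then obtain y where "msg_mid inR = Some y" using m by auto
    thus ?thesis using right_msg_mid None unfolding received_fields using Wt by auto
  qed
qed

lemma received_fl: "inv_fl (Suc r) i received" unfolding inv_fl_def
proof
  assume a: "fl received"
  show "nl received = Some i \<and> Suc r = lwave_time s i \<and> i + 1 < n"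
  proof (cases "col st = None \<and> (if woken \<and> i = 0 then Some 0 else nl st) = None
      \<and> msg_count inL \<noteq> None")
    case True
    then obtain v where v: "msg_count inL = Some v" by auto
    hence "v = i" "Suc r = lwave_time s i" using left_msg_count by auto
    moreover have "i + 1 \<noteq> n" using a True unfolding received_fields by simp
    ultimately show ?thesis unfolding received_fields using True v i_lt_n by simp
  next
    case False
    hence f: "fl received = (woken \<and> i = 0 \<and> i + 1 \<noteq> n)" unfolding received_fields by (rule if_not_P)
    have nn: "nl received = (if woken \<and> i = 0 then Some 0 else nl st)" using False
      unfolding received_fields by (rule if_not_P)
    have Wi: "woken" "i = 0" "i + 1 \<noteq> n" using a f by auto
    hence "Suc r = lwave_time s i" using woken_wake_time wake_time_simps(2,3) by auto
    thus ?thesis using nn Wi i_lt_n by simp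
  qed
qed

lemma received_fr: "inv_fr (Suc r) i received" unfolding inv_fr_def
proof
  assume a: "fr received"
  show "nr received = Some (n-1-i) \<and> Suc r = rwave_time n s i \<and> 0 < i"
  proof (cases "col st = None \<and> (if woken \<and> i + 1 = n then Some 0 else nr st) = None
      \<and> msg_count inR \<noteq> None")
    case True
    then obtain v where v: "msg_count inR = Some v" by auto
    hence "v = n-1-i" "Suc r = rwave_time n s i" using right_msg_count by auto
    moreover have "i \<noteq> 0" using a True unfolding received_fields by simp
    ultimately show ?thesis unfolding received_fields using True v by simp
  next
    case False
    hence f: "fr received = (woken \<and> i + 1 = n \<and> i \<noteq> 0)" unfolding received_fields by (rule if_not_P)
    have nn: "nr received = (if woken \<and> i + 1 = n then Some 0 else nr st)" using False
      unfolding received_fields by (rule if_not_P)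
    have Wi: "woken" "i + 1 = n" "i \<noteq> 0" using a f by auto
    hence "Suc r = rwave_time n s i" "n - 1 - i = 0"
      using woken_wake_time wake_time_simps(4,5)[OF start_in_line] by auto
    thus ?thesis using nn Wi by simp
  qed
qed

lemma received_left_end_wave: "inv_left_end_wave (Suc r) i received" unfolding inv_left_end_wave_def
proof
  assume a: "i = 0 \<and> i + 1 < n \<and> Suc r = wake_time i s"
  have dd: "wake_time i s = Suc r" using a by simp
  have Wt: woken using woken_if_due[OF asleep_if_due[OF dd] dd] .
  have "\<not> (col st = None \<and> (if woken \<and> i = 0 then Some 0 else nl st) = None \<and> msg_count inL \<noteq> None)"
    using Wt a by simp
  hence f: "fl received = (woken \<and> i = 0 \<and> i + 1 \<noteq> n)" unfolding received_fields by (rule if_not_P)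
  show "fl received" using f Wt a by simp
qed

lemma received_right_end_wave: "inv_right_end_wave (Suc r) i received"
  unfolding inv_right_end_wave_def
proof
  assume a: "i + 1 = n \<and> 0 < i \<and> Suc r = wake_time i s"
  have dd: "wake_time i s = Suc r" using a by simp
  have Wt: woken using woken_if_due[OF asleep_if_due[OF dd] dd] .
  have "\<not> (col st = None \<and> (if woken \<and> i + 1 = n then Some 0 else nr st) = None
      \<and> msg_count inR \<noteq> None)"
    using Wt a by simp
  hence f: "fr received = (woken \<and> i + 1 = n \<and> i \<noteq> 0)" unfolding received_fields by (rule if_not_P)
  show "fr received" using f Wt a by simp
qed

lemma received_decision_clauses:
  shows "inv_early_colour_1 (Suc r) i received" "inv_early_colour_k (Suc r) i received"
    "inv_interior_decision (Suc r) i received" "inv_left_end_colour (Suc r) i received"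
    "inv_right_end_colour (Suc r) i received"
  using st_early_colour_1 st_early_colour_k st_interior_decision st_left_end_colour st_right_end_colour
  unfolding inv_early_colour_1_def inv_early_colour_k_def inv_interior_decision_def
    inv_left_end_colour_def inv_right_end_colour_def receive_col
  by auto

lemma received_inv_receive: "received_inv (Suc r) i received"
  unfolding received_inv_def
  using received_awake received_asleep received_clock received_nl received_nr received_fmR received_fmL
    received_mid received_fm_mid received_fl received_fr received_left_end_wave received_right_end_wave
    received_decision_clauses
  by blast

end

lemma msg_from_left_ok_None: "msg_from_left_ok r 0 None"
  by (simp add: msg_from_left_ok_def msg_mid_def msg_count_def)
lemma msg_from_right_ok_None: "i + 1 = n \<Longrightarrow> msg_from_right_ok r i None" using start_in_line
  by (auto simp: msg_from_right_ok_def msg_mid_def msg_count_def)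

lemma msg_from_left_ok_send_right:
  assumes i: "0 < i" "i < n" and inv: "agent_inv r (i-1) st"
  shows "msg_from_left_ok r i (send_right st)"
proof -
  have fr: "inv_fmR r (i-1) st" "inv_fm_mid r (i-1) st" "inv_fl r (i-1) st"
    using inv unfolding agent_inv_def received_inv_def by auto
  have a1: "fmR st \<longleftrightarrow> r = wake_time (i-1) s \<and> s \<le> i-1 \<and> i < n" using fr(1) i
    unfolding inv_fmR_def by simp
  have a2: "fmR st \<Longrightarrow> mid st = Some (wake_time (i-1) s)" using fr(2) unfolding inv_fm_mid_def by simp
  have a3: "fl st \<Longrightarrow> nl st = Some (i-1) \<and> r = lwave_time s (i-1)" using fr(3)
    unfolding inv_fl_def by simp
  have dd: "s \<le> i - 1 \<Longrightarrow> wake_time i s = Suc (wake_time (i-1) s)" using i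
    unfolding wake_time_def by auto
  have dl: "wake_time i s \<le> Suc (lwave_time s (i-1))" using i
    unfolding wake_time_def lwave_time_def by auto
  have ll: "lwave_time s i = Suc (lwave_time s (i-1))" using i unfolding lwave_time_def by auto
  have sent_time: "\<not> (\<not> fmR st \<and> \<not> fl st) \<longrightarrow> wake_time i s \<le> Suc r" using a1 a3 dd dl by auto
  have sent_mid: "\<forall>x. (if fmR st then map_option Suc (mid st) else None) = Some x
      \<longrightarrow> x = wake_time i s \<and> s < i \<and> Suc r = wake_time i s"
    using a1 a2 dd i by (auto split: if_split_asm)
  have sent_count: "\<forall>v. (if fl st then map_option Suc (nl st) else None) = Some v \<longrightarrow> v = i
      \<and> Suc r = lwave_time s i"
    using a3 ll i by (auto split: if_split_asm)
  have sent_mid_due: "s < i \<and> Suc r = wake_time i s \<longrightarrow> (if fmR st then map_option Suc (mid st)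
      else None) = Some (wake_time i s)"
  proof
    assume h: "s < i \<and> Suc r = wake_time i s"
    hence h2: "s \<le> i - 1" by auto
    with h have "fmR st" "r = wake_time (i-1) s" using a1 dd i by auto
    thus "(if fmR st then map_option Suc (mid st) else None) = Some (wake_time i s)"
      using a2 dd h2 by simp
  qed
  have none_at_end: "i = 0 \<longrightarrow> \<not> fmR st \<and> \<not> fl st" using i by simp
  show ?thesis unfolding msg_from_left_ok_def send_right_simps
    using sent_time sent_mid sent_count sent_mid_due none_at_end by blast
qed

lemma msg_from_right_ok_send_left:
  assumes i: "i + 1 < n" and inv: "agent_inv r (i+1) st"
  shows "msg_from_right_ok r i (send_left st)"
proof -
  have fr: "inv_fmL r (i+1) st" "inv_fm_mid r (i+1) st" "inv_fr r (i+1) st"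
    using inv unfolding agent_inv_def received_inv_def by auto
  have a1: "fmL st \<longleftrightarrow> r = wake_time (i+1) s \<and> i+1 \<le> s" using fr(1) i unfolding inv_fmL_def by simp
  have a2: "fmL st \<Longrightarrow> mid st = Some (wake_time (i+1) s)" using fr(2) unfolding inv_fm_mid_def by simp
  have a3: "fr st \<Longrightarrow> nr st = Some (n-1-(i+1)) \<and> r = rwave_time n s (i+1)" using fr(3)
    unfolding inv_fr_def by simp
  have dd: "i + 1 \<le> s \<Longrightarrow> wake_time i s = Suc (wake_time (i+1) s)" unfolding wake_time_def by auto
  have dl: "wake_time i s \<le> rwave_time n s i"
    using wake_time_le_rwave_time[OF start_in_line] i by simp
  have ll: "rwave_time n s i = Suc (rwave_time n s (i+1))" using i start_in_line
    unfolding rwave_time_def by auto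
  have nn: "Suc (n-1-(i+1)) = n - 1 - i" using i by auto
  have sent_time: "\<not> (\<not> fmL st \<and> \<not> fr st) \<longrightarrow> wake_time i s \<le> Suc r" using a1 a3 dd dl ll by auto
  have sent_mid: "\<forall>x. (if fmL st then map_option Suc (mid st) else None) = Some x
      \<longrightarrow> x = wake_time i s \<and> i < s \<and> Suc r = wake_time i s"
    using a1 a2 dd i by (auto split: if_split_asm)
  have sent_count: "\<forall>v. (if fr st then map_option Suc (nr st) else None) = Some v \<longrightarrow> v = n - 1 - i
      \<and> Suc r = rwave_time n s i"
    using a3 ll nn by (auto split: if_split_asm)
  have sent_mid_due: "i < s \<and> Suc r = wake_time i s \<longrightarrow> (if fmL st then map_option Suc (mid st)
      else None) = Some (wake_time i s)"
  proof
    assume h: "i < s \<and> Suc r = wake_time i s"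
    hence h2: "i + 1 \<le> s" by auto
    with h have "fmL st" "r = wake_time (i+1) s" using a1 dd by auto
    thus "(if fmL st then map_option Suc (mid st) else None) = Some (wake_time i s)"
      using a2 dd h2 by simp
  qed
  have none_at_end: "i + 1 = n \<longrightarrow> \<not> fmL st \<and> \<not> fr st" using i by simp
  show ?thesis unfolding msg_from_right_ok_def send_left_simps
    using sent_time sent_mid sent_count sent_mid_due none_at_end by blast
qed

lemma agent_inv_sleeping: "i \<noteq> s \<Longrightarrow> agent_inv 0 i sleeping"
  unfolding agent_inv_def received_inv_def inv_defs sleeping_def by (auto simp: wake_time_def)

lemma agent_inv_init_start: "agent_inv 0 s (init_start k (s=0) (s+1=n))"
proof -
  have "received_inv 0 s \<lparr>awake = True, mid = Some 0, tm = Some 0,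
      nl = (if s=0 then Some 0 else None), nr = (if s+1=n then Some 0 else None), col = None,
      fromL = False, fmL = (s \<noteq> 0), fmR = (s+1 \<noteq> n),
      fl = (s=0 \<and> s+1 \<noteq> n), fr = (s+1=n \<and> s \<noteq> 0)\<rparr>"
    using start_in_line unfolding received_inv_def inv_defs
    by (auto simp: wake_time_def lwave_time_def rwave_time_def)
  from agent_inv_gc_decide[OF this] show ?thesis unfolding init_start_def by simp
qed

abbreviation E where "E r i \<equiv> exec n k s r i"
definition msg_in_left where "msg_in_left r i = (if 0 < i then send_right (E r (i - 1)) else None)"
definition msg_in_right where "msg_in_right r i = (if i + 1 < n then send_left (E r (i + 1))
    else None)"

lemma E_Suc: "E (Suc r) i = step k (i=0) (i+1=n) (E r i) (msg_in_left r i) (msg_in_right r i)"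
  by (simp add: msg_in_left_def msg_in_right_def)

lemma received_inv_step:
  assumes inv: "\<And>j. j < n \<Longrightarrow> agent_inv r j (E r j)" and i: "i < n"
  shows "received_inv (Suc r) i (receive (i=0) (i+1=n) (E r i) (msg_in_left r i) (msg_in_right r i))"
proof (rule received_inv_receive[OF inv[OF i] i])
  show "msg_from_left_ok r i (msg_in_left r i)"
  proof (cases "0 < i")
    case True
    then show ?thesis using msg_from_left_ok_send_right[OF True i inv[of "i - 1"]] i
      unfolding msg_in_left_def by simp
  qed (simp add: msg_in_left_def msg_from_left_ok_None)
  show "msg_from_right_ok r i (msg_in_right r i)"
  proof (cases "i + 1 < n")
    case True
    then show ?thesis using msg_from_right_ok_send_left[OF True inv[of "i + 1"]]
      unfolding msg_in_right_def by simp
  qed (use i in \<open>simp add: msg_in_right_def msg_from_right_ok_None\<close>)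
qed

lemma E_agent_inv: "i < n \<Longrightarrow> agent_inv r i (E r i)"
proof (induction r arbitrary: i)
  case 0
  then show ?case using agent_inv_init_start agent_inv_sleeping by (cases "i = s") auto
next
  case (Suc r)
  from agent_inv_gc_decide[OF received_inv_step[OF Suc.IH Suc.prems]]
  show ?case unfolding E_Suc step_eq_receive .
qed

lemma E_clauses:
  assumes "i < n"
  shows "inv_awake r i (E r i)" "inv_asleep r i (E r i)" "inv_clock r i (E r i)" "inv_nl r i (E r i)"
   "inv_nr r i (E r i)" "inv_fmR r i (E r i)" "inv_fmL r i (E r i)" "inv_mid r i (E r i)"
   "inv_fm_mid r i (E r i)" "inv_fl r i (E r i)" "inv_fr r i (E r i)" "inv_left_end_wave r i (E r i)"
   "inv_right_end_wave r i (E r i)" "inv_early_colour_1 r i (E r i)" "inv_early_colour_k r i (E r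
       i)" "inv_interior_decision r i (E r i)"
   "inv_left_end_colour r i (E r i)" "inv_right_end_colour r i (E r i)"
   "inv_decide_idle r i (E r i)" "inv_undecided_one_count r i (E r i)" "inv_ends_decided r i (E r
       i)" "inv_clock_erased r i (E r i)"
  using E_agent_inv[OF assms] unfolding agent_inv_def received_inv_def by auto

lemmas E_awake_iff = E_clauses(1)[unfolded inv_awake_def]
lemmas E_asleep = E_clauses(2)[unfolded inv_asleep_def]
lemmas E_undecided_clock = E_clauses(3)[unfolded inv_clock_def]
lemmas E_nl = E_clauses(4)[unfolded inv_nl_def]
lemmas E_nr = E_clauses(5)[unfolded inv_nr_def]
lemmas E_fmR_iff = E_clauses(6)[unfolded inv_fmR_def]
lemmas E_fmL_iff = E_clauses(7)[unfolded inv_fmL_def]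
lemmas E_mid = E_clauses(8)[unfolded inv_mid_def]
lemmas E_fm_mid = E_clauses(9)[unfolded inv_fm_mid_def]
lemmas E_fl = E_clauses(10)[unfolded inv_fl_def]
lemmas E_fr = E_clauses(11)[unfolded inv_fr_def]
lemmas E_left_end_wave = E_clauses(12)[unfolded inv_left_end_wave_def]
lemmas E_right_end_wave = E_clauses(13)[unfolded inv_right_end_wave_def]
lemmas E_early_colour_1 = E_clauses(14)[unfolded inv_early_colour_1_def]
lemmas E_early_colour_k = E_clauses(15)[unfolded inv_early_colour_k_def]
lemmas E_interior_decision = E_clauses(16)[unfolded inv_interior_decision_def]
lemmas E_left_end_colour = E_clauses(17)[unfolded inv_left_end_colour_def]
lemmas E_right_end_colour = E_clauses(18)[unfolded inv_right_end_colour_def]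
lemmas E_decide_idle = E_clauses(19)[unfolded inv_decide_idle_def]
lemmas E_undecided_one_count = E_clauses(20)[unfolded inv_undecided_one_count_def]
lemmas E_ends_decided = E_clauses(21)[unfolded inv_ends_decided_def]
lemmas E_clock_erased = E_clauses(22)[unfolded inv_clock_erased_def]

lemma col_E_Suc_decided: "col (E r i) \<noteq> None \<Longrightarrow> col (E (Suc r) i) = col (E r i)"
  unfolding E_Suc by (rule step_col_decided)

lemma col_E_stable:
  assumes c: "col (E r i) \<noteq> None" and le: "r \<le> r'"
  shows "col (E r' i) = col (E r i)"
  using le
proof (induction r' rule: dec_induct)
  case base thus ?case by simp
next
  case (step m)
  hence "col (E m i) \<noteq> None" using c by simp
  thus ?case using col_E_Suc_decided[of m i] step.IH by simp
qed

lemma col_E_undecided_before: "col (E r' i) = None \<Longrightarrow> r \<le> r' \<Longrightarrow> col (E r i) = None"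
proof (rule ccontr)
  assume a: "col (E r' i) = None" "r \<le> r'" "col (E r i) \<noteq> None"
  have "col (E r' i) = col (E r i)" by (rule col_E_stable[OF a(3) a(2)])
  thus False using a by simp
qed

lemma nl_E_Suc:
  assumes i: "i < n" and c: "col (E (Suc r) i) = None" and a: "nl (E r i) = Some a"
  shows "nl (E (Suc r) i) = Some a"
proof -
  have eq: "E (Suc r) i = receive (i=0) (i+1=n) (E r i) (msg_in_left r i) (msg_in_right r i)"
    using c unfolding E_Suc by (rule step_undecided)
  have aw: "awake (E r i)" using E_asleep[OF i, of r] a by auto
  show ?thesis unfolding eq receive_fields using aw a by simp
qed

lemma nr_E_Suc:
  assumes i: "i < n" and c: "col (E (Suc r) i) = None" and a: "nr (E r i) = Some a"
  shows "nr (E (Suc r) i) = Some a"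
proof -
  have eq: "E (Suc r) i = receive (i=0) (i+1=n) (E r i) (msg_in_left r i) (msg_in_right r i)"
    using c unfolding E_Suc by (rule step_undecided)
  have aw: "awake (E r i)" using E_asleep[OF i, of r] a by auto
  show ?thesis unfolding eq receive_fields using aw a by simp
qed

lemma nl_E_stable:
  assumes i: "i < n" and "r \<le> r'" and c: "col (E r' i) = None" and a: "nl (E r i) = Some a"
  shows "nl (E r' i) = Some a"
  using assms(2) c
proof (induction r' rule: dec_induct)
  case base thus ?case using a by simp
next
  case (step m)
  have "col (E m i) = None" using col_E_undecided_before[OF step.prems] by simp
  hence "nl (E m i) = Some a" using step.IH by simp
  thus ?case using nl_E_Suc[OF i step.prems] by simp
qed

lemma nr_E_stable:
  assumes i: "i < n" and "r \<le> r'" and c: "col (E r' i) = None" and a: "nr (E r i) = Some a"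
  shows "nr (E r' i) = Some a"
  using assms(2) c
proof (induction r' rule: dec_induct)
  case base thus ?case using a by simp
next
  case (step m)
  have "col (E m i) = None" using col_E_undecided_before[OF step.prems] by simp
  hence "nr (E m i) = Some a" using step.IH by simp
  thus ?case using nr_E_Suc[OF i step.prems] by simp
qed

section \<open>Propagation of the counts\<close>

lemma right_wave_step:
  assumes j: "0 < j" "j + 1 < n" and c: "col (E t j) = None" and f: "fr (E t (j+1))"
  shows "fr (E (Suc t) j) \<and> nr (E (Suc t) j) = Some (n-1-j)"
proof -
  have h1: "nr (E t (j+1)) = Some (n-1-(j+1))" "t = rwave_time n s (j+1)"
    using E_fr[OF j(2), of t] f by auto
  have rt: "rwave_time n s j = Suc t" using h1(2) j start_in_line unfolding rwave_time_def by auto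
  have nN: "nr (E t j) = None" using E_nr[of j t] j rt by auto
  have count: "msg_count (msg_in_right t j) = Some (n-1-j)" unfolding msg_in_right_def
    using j f h1(1) by (simp add: send_left_simps)
  have fp: "fr (receive (j=0) (j+1=n) (E t j) (msg_in_left t j) (msg_in_right t j))"
    unfolding receive_fields using c nN count j by simp
  have np: "nr (receive (j=0) (j+1=n) (E t j) (msg_in_left t j) (msg_in_right t j)) = Some
      (n-1-j)" unfolding receive_fields using c nN count j by simp
  show ?thesis unfolding E_Suc step_fields using fp np by simp
qed

lemma left_wave_step:
  assumes j: "0 < j" "j + 1 < n" and c: "col (E t j) = None" and f: "fl (E t (j-1))"
  shows "fl (E (Suc t) j) \<and> nl (E (Suc t) j) = Some j"
proof -
  have h1: "nl (E t (j-1)) = Some (j-1)" "t = lwave_time s (j-1)"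
  proof -
    have jj: "j - 1 < n" using j by simp
    show "nl (E t (j-1)) = Some (j-1)" "t = lwave_time s (j-1)" using E_fl[OF jj, of t] f by auto
  qed
  have lt: "lwave_time s j = Suc t" using h1(2) j unfolding lwave_time_def by auto
  have nN: "nl (E t j) = None" using E_nl[of j t] j lt by auto
  have count: "msg_count (msg_in_left t j) = Some j" unfolding msg_in_left_def using j f h1(1)
    by (simp add: send_right_simps)
  have fp: "fl (receive (j=0) (j+1=n) (E t j) (msg_in_left t j) (msg_in_right t j))"
    unfolding receive_fields using c nN count j by simp
  have np: "nl (receive (j=0) (j+1=n) (E t j) (msg_in_left t j) (msg_in_right t j)) = Some j"
    unfolding receive_fields using c nN count j by simp
  show ?thesis unfolding E_Suc step_fields using fp np by simp
qed

lemma right_wave_arrives: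
  assumes "0 < j" "j < n"
  shows "fr (E (rwave_time n s j) j) \<or> (\<exists>j'. j \<le> j' \<and> j' + 1 < n
      \<and> col (E (rwave_time n s j' - 1) j') \<noteq> None)"
  using assms
proof (induction "n - 1 - j" arbitrary: j)
  case 0
  hence jn: "j + 1 = n" by simp
  have "rwave_time n s j = wake_time j s" using wake_time_simps(4,5)[OF start_in_line jn] by simp
  thus ?case using E_right_end_wave[OF 0(3), of "rwave_time n s j"] jn 0(2) by simp
next
  case (Suc m)
  hence j1: "j + 1 < n" and mm: "m = n - 1 - (j + 1)" by auto
  have IH: "fr (E (rwave_time n s (j+1)) (j+1)) \<or> (\<exists>j'. j + 1 \<le> j' \<and> j' + 1 < n
      \<and> col (E (rwave_time n s j' - 1) j') \<noteq> None)"
    using Suc.hyps(1)[OF mm] j1 by simp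
  have rt: "rwave_time n s j = Suc (rwave_time n s (j+1))" using j1 start_in_line
    unfolding rwave_time_def by auto
  show ?case
  proof (cases "fr (E (rwave_time n s (j+1)) (j+1))")
    case True
    show ?thesis
    proof (cases "col (E (rwave_time n s (j+1)) j) = None")
      case c: True
      have "fr (E (Suc (rwave_time n s (j+1))) j)"
        using right_wave_step[OF Suc.prems(1) j1 c] True by simp
      thus ?thesis using rt by simp
    next
      case False
      hence "col (E (rwave_time n s j - 1) j) \<noteq> None" using rt by simp
      thus ?thesis using j1 by blast
    qed
  next
    case False
    then obtain j' where "j + 1 \<le> j'" "j' + 1 < n" "col (E (rwave_time n s j' - 1) j') \<noteq> None"
      using IH by blast
    thus ?thesis by (intro disjI2 exI[of _ j']) simp
  qed
qed

lemma left_wave_arrives: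
  assumes "j + 1 < n"
  shows "fl (E (lwave_time s j) j) \<or> (\<exists>j'. 0 < j' \<and> j' \<le> j \<and> col (E (lwave_time s j' - 1) j') \<noteq> None)"
  using assms
proof (induction j)
  case 0
  have "lwave_time s 0 = wake_time 0 s" using wake_time_simps(2,3) by simp
  thus ?case using E_left_end_wave[of 0 "lwave_time s 0"] 0 by simp
next
  case (Suc j)
  hence j1: "j + 1 < n" by simp
  have IH: "fl (E (lwave_time s j) j) \<or> (\<exists>j'. 0 < j' \<and> j' \<le> j
      \<and> col (E (lwave_time s j' - 1) j') \<noteq> None)"
    using Suc.IH[OF j1] .
  have lt: "lwave_time s (Suc j) = Suc (lwave_time s j)" unfolding lwave_time_def by simp
  show ?case
  proof (cases "fl (E (lwave_time s j) j)")
    case True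
    show ?thesis
    proof (cases "col (E (lwave_time s j) (Suc j)) = None")
      case c: True
      have "fl (E (Suc (lwave_time s j)) (Suc j))"
        using left_wave_step[of "Suc j", OF _ Suc.prems c] True by simp
      thus ?thesis using lt by simp
    next
      case False
      hence "col (E (lwave_time s (Suc j) - 1) (Suc j)) \<noteq> None" using lt by simp
      thus ?thesis by blast
    qed
  next
    case False
    then obtain j' where "0 < j'" "j' \<le> j" "col (E (lwave_time s j' - 1) j') \<noteq> None" using IH by blast
    thus ?thesis by (intro disjI2 exI[of _ j']) simp
  qed
qed

abbreviation rc where "rc i \<equiv> ribbon_color n k i"

lemma left_wave_blocked:
  assumes "0 < j" "j + 1 < n" "col (E (lwave_time s j - 1) j) \<noteq> None"
  shows "rwave_time n s j < lwave_time s j"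
proof -
  have "1 \<le> lwave_time s j" using assms(1) unfolding lwave_time_def by simp
  then show ?thesis using E_interior_decision[of j "lwave_time s j - 1"] assms by auto
qed

lemma right_wave_blocked:
  assumes "0 < j" "j + 1 < n" "col (E (rwave_time n s j - 1) j) \<noteq> None"
  shows "lwave_time s j < rwave_time n s j"
proof -
  have "1 \<le> rwave_time n s j" using assms(2) unfolding rwave_time_def by simp
  then show ?thesis using E_interior_decision[of j "rwave_time n s j - 1"] assms by auto
qed

lemma left_wave_arrives_first:
  assumes i: "i + 1 < n" and first: "lwave_time s i \<le> rwave_time n s i"
  shows "fl (E (lwave_time s i) i)"
proof -
  have False if j: "0 < j" "j \<le> i" "col (E (lwave_time s j - 1) j) \<noteq> None" for j
  proof -
    have "rwave_time n s j < lwave_time s j" using left_wave_blocked j i by simp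
    moreover have "rwave_time n s i \<le> rwave_time n s j" "lwave_time s j \<le> lwave_time s i"
      using j i unfolding rwave_time_def lwave_time_def by auto
    ultimately show False using first by linarith
  qed
  then show ?thesis using left_wave_arrives[OF i] by blast
qed

lemma right_wave_arrives_first:
  assumes i: "0 < i" "i < n" and first: "rwave_time n s i \<le> lwave_time s i"
  shows "fr (E (rwave_time n s i) i)"
proof -
  have False if j: "i \<le> j" "j + 1 < n" "col (E (rwave_time n s j - 1) j) \<noteq> None" for j
  proof -
    have "lwave_time s j < rwave_time n s j" using right_wave_blocked j i by simp
    moreover have "rwave_time n s j \<le> rwave_time n s i" "lwave_time s i \<le> lwave_time s j"
      using j i start_in_line unfolding rwave_time_def lwave_time_def by auto
    ultimately show False using first by linarith
  qed
  then show ?thesis using right_wave_arrives[OF i] by blast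
qed

lemma n_pos: "1 \<le> n" using start_in_line by simp

lemma ribbon_color_first: "rc 0 = 1"
proof -
  have "0 < ribbon_size n k 1"
  proof (cases "n div k = 0")
    case True
    hence "n < k" using k_pos by (simp add: div_eq_0_iff)
    hence "n mod k = n" by simp
    thus ?thesis using ribbon_size_first[OF k_pos, of n] n_pos by simp
  next
    case False thus ?thesis using ribbon_size_first[OF k_pos, of n] by simp
  qed
  moreover have "(0::nat) < n" using start_in_line by simp
  ultimately show ?thesis using ribbon_color_eq_1_iff[OF k_pos, of 0 n] by simp
qed

lemma ribbon_color_last: "2 \<le> n \<Longrightarrow> rc (n - 1) = k"
proof -
  assume n2: "2 \<le> n"
  have "1 \<le> ribbon_size n k k"
  proof (cases "k = 1")
    case True thus ?thesis using ribbon_size_single[of n] n_pos by simp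
  next
    case False
    hence k2: "2 \<le> k" using k_pos by simp
    show ?thesis
    proof (cases "n div k = 0")
      case True
      hence "n < k" using k_pos by (simp add: div_eq_0_iff)
    hence "n mod k = n" by simp
      thus ?thesis using ribbon_size_last[OF k2, of n] n2 by simp
    next
      case False thus ?thesis using ribbon_size_last[OF k2, of n] by simp
    qed
  qed
  thus ?thesis using ribbon_color_eq_k_iff[OF k_pos, of "n-1" n] n2 by simp
qed

lemma ribbon_color_1_if_small: "k * i < n \<Longrightarrow> i < n \<Longrightarrow> rc i = 1"
proof -
  assume a: "k * i < n" "i < n"
  have "i < ribbon_size n k 1"
  proof (rule ccontr)
    assume "\<not> i < ribbon_size n k 1"
    hence "k * ribbon_size n k 1 \<le> k * i" by (intro mult_le_mono2) simp
    moreover have "n \<le> k * ribbon_size n k 1"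
    proof -
      obtain q m where qm: "q = n div k" "m = n mod k" by simp
      have nq: "n = k * q + m" using qm by simp
      have mk: "m < k" using k_pos qm by simp
      have e: "k * (q + 1) = k * q + k" by (simp add: algebra_simps)
      show ?thesis unfolding ribbon_size_first[OF k_pos] qm[symmetric] using nq mk e
        by (cases "1 \<le> m") simp_all
    qed
    ultimately show False using a by linarith
  qed
  thus ?thesis using ribbon_color_eq_1_iff[OF k_pos a(2)] by simp
qed

lemma ribbon_color_k_if_small: "k * (n - 1 - i) + 2 \<le> n \<Longrightarrow> i < n \<Longrightarrow> rc i = k"
proof -
  assume a: "k * (n - 1 - i) + 2 \<le> n" "i < n"
  have "n - 1 - i < ribbon_size n k k"
  proof (cases "k = 1")
    case True thus ?thesis using ribbon_size_single[of n] a by simp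
  next
    case False
    hence k2: "2 \<le> k" using k_pos by simp
    show ?thesis
    proof (rule ccontr)
      assume "\<not> n - 1 - i < ribbon_size n k k"
      hence le: "k * ribbon_size n k k \<le> k * (n - 1 - i)" by (intro mult_le_mono2) simp
      obtain q m where qm: "q = n div k" "m = n mod k" by simp
      have nq: "n = k * q + m" using qm by simp
      have mk: "m < k" using k_pos qm by simp
      have e: "k * (q + 1) = k * q + k" by (simp add: algebra_simps)
      have "n - 1 \<le> k * ribbon_size n k k" unfolding ribbon_size_last[OF k2] qm[symmetric]
        using nq mk e by (cases "2 \<le> m") simp_all
      thus False using le a by linarith
    qed
  qed
  thus ?thesis using ribbon_color_eq_k_iff[OF k_pos a(2)] by simp
qed

lemma received_inv_E:
  "i < n \<Longrightarrow> received_inv (Suc r) i (receive (i=0) (i+1=n) (E r i) (msg_in_left r i) (msg_in_right r i))"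
  using received_inv_step[OF E_agent_inv] .

lemma wave_times_sum: "i < n \<Longrightarrow> rwave_time n s i + s + i = 2 * n - 2" using start_in_line
  unfolding rwave_time_def by auto

section \<open>Correctness of the colours\<close>

lemma col_before_right_wave:
  assumes "j + 1 < n" and "col (E (rwave_time n s j - 1) j) = Some c"
  shows "c = 1"
proof -
  have "1 \<le> rwave_time n s j" using assms(1) unfolding rwave_time_def by simp
  then show ?thesis using E_early_colour_1[of j "rwave_time n s j - 1"] assms by auto
qed

lemma col_before_left_wave:
  assumes "0 < j" "j < n" and "col (E (lwave_time s j - 1) j) = Some c"
  shows "c = k"
proof -
  have "1 \<le> lwave_time s j" using assms(1) unfolding lwave_time_def by simp
  then show ?thesis using E_early_colour_k[OF assms(2), of "lwave_time s j - 1"] assms by auto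
qed

lemma early_colour_1_correct:
  assumes i: "0 < i" "i + 1 < n"
    and IH: "\<And>r' j c. r' \<le> r \<Longrightarrow> j < n \<Longrightarrow> col (E r' j) = Some c \<Longrightarrow> c = rc j"
    and undecided: "col (E r i) = None"
    and no_count: "nr (E r i) = None" "nr (E (Suc r) i) = None"
    and cond: "2 * k * i \<le> Suc r + s + i"
  shows "rc i = 1"
proof (cases "Suc r < rwave_time n s i")
  case True
  then have "k * i < n" using cond wave_times_sum[of i] i by linarith
  then show ?thesis using ribbon_color_1_if_small i by simp
next
  case late: False
  have "fr (E (rwave_time n s i) i) \<or>
      (\<exists>j. i \<le> j \<and> j + 1 < n \<and> col (E (rwave_time n s j - 1) j) \<noteq> None)"
    using right_wave_arrives[of i] i by simp
  then show ?thesis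
  proof (elim disjE exE conjE)
    assume "fr (E (rwave_time n s i) i)"
    then have count: "nr (E (rwave_time n s i) i) = Some (n-1-i)"
      using E_fr[of i "rwave_time n s i"] i by simp
    show ?thesis
    proof (cases "rwave_time n s i \<le> r")
      case True
      then show ?thesis using nr_E_stable[OF _ True undecided count] i no_count(1) by simp
    next
      case False
      then have "rwave_time n s i = Suc r" using late by simp
      then show ?thesis using count no_count(2) by simp
    qed
  next
    fix j assume j: "i \<le> j" "j + 1 < n" "col (E (rwave_time n s j - 1) j) \<noteq> None"
    have "rwave_time n s i - 1 \<le> r" using late by simp
    then have "j \<noteq> i" using j(3) col_E_undecided_before[OF undecided] by auto
    then have "i < j" using j(1) by simp
    then have earlier: "rwave_time n s j < rwave_time n s i"
      using j(2) start_in_line unfolding rwave_time_def by simp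
    obtain c where c: "col (E (rwave_time n s j - 1) j) = Some c" using j(3) by auto
    have "rc j = 1" using IH[OF _ _ c] col_before_right_wave[OF j(2) c] earlier late j(2) by simp
    then show ?thesis
      using ribbon_color_mono[OF k_pos, of i j n] ribbon_color_bounds[OF k_pos, of i n] \<open>i < j\<close> j(2)
      by simp
  qed
qed

lemma early_colour_k_correct:
  assumes i: "0 < i" "i + 1 < n"
    and IH: "\<And>r' j c. r' \<le> r \<Longrightarrow> j < n \<Longrightarrow> col (E r' j) = Some c \<Longrightarrow> c = rc j"
    and undecided: "col (E r i) = None"
    and no_count: "nl (E r i) = None" "nl (E (Suc r) i) = None"
    and cond: "2 * k * (n-1-i) \<le> Suc r + (n-1-s) + (n-1-i)"
  shows "rc i = k"
proof (cases "Suc r < lwave_time s i")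
  case True
  then have "k * (n-1-i) + 2 \<le> n"
    using cond wave_times_sum[of i] i unfolding lwave_time_def rwave_time_def by linarith
  then show ?thesis using ribbon_color_k_if_small i by simp
next
  case late: False
  have "fl (E (lwave_time s i) i) \<or> (\<exists>j. 0 < j \<and> j \<le> i \<and> col (E (lwave_time s j - 1) j) \<noteq> None)"
    using left_wave_arrives[of i] i by simp
  then show ?thesis
  proof (elim disjE exE conjE)
    assume "fl (E (lwave_time s i) i)"
    then have count: "nl (E (lwave_time s i) i) = Some i" using E_fl[of i "lwave_time s i"] i by simp
    show ?thesis
    proof (cases "lwave_time s i \<le> r")
      case True
      then show ?thesis using nl_E_stable[OF _ True undecided count] i no_count(1) by simp
    next
      case False
      then have "lwave_time s i = Suc r" using late by simp
      then show ?thesis using count no_count(2) by simp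
    qed
  next
    fix j assume j: "0 < j" "j \<le> i" "col (E (lwave_time s j - 1) j) \<noteq> None"
    have "lwave_time s i - 1 \<le> r" using late by simp
    then have "j \<noteq> i" using j(3) col_E_undecided_before[OF undecided] by auto
    then have "j < i" using j(2) by simp
    then have earlier: "lwave_time s j < lwave_time s i" unfolding lwave_time_def by simp
    obtain c where c: "col (E (lwave_time s j - 1) j) = Some c" using j(3) by auto
    have "j < n" using \<open>j < i\<close> i by simp
    then have "rc j = k" using IH[OF _ _ c] col_before_left_wave[OF j(1) _ c] earlier late by simp
    then show ?thesis
      using ribbon_color_mono[OF k_pos, of j i n] ribbon_color_bounds[OF k_pos, of i n] \<open>j < i\<close> i
      by simp
  qed
qed

lemma new_colour_E:
  assumes i: "0 < i" "i + 1 < n"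
    and undecided: "col (E r i) = None" and decided: "col (E (Suc r) i) = Some c"
  shows "c = rc i
    \<or> (c = 1 \<and> nr (E r i) = None \<and> nr (E (Suc r) i) = None \<and> 2 * k * i \<le> Suc r + s + i)
    \<or> (c = k \<and> nl (E r i) = None \<and> nl (E (Suc r) i) = None
        \<and> 2 * k * (n-1-i) \<le> Suc r + (n-1-s) + (n-1-i))"
proof -
  let ?P = "receive (i=0) (i+1=n) (E r i) (msg_in_left r i) (msg_in_right r i)"
  have inv: "received_inv (Suc r) i ?P" using i by (intro received_inv_E) simp
  then have inv_nl: "inv_nl (Suc r) i ?P" and inv_nr: "inv_nr (Suc r) i ?P"
    and inv_asleep: "inv_asleep (Suc r) i ?P" and inv_clock: "inv_clock (Suc r) i ?P"
    unfolding received_inv_def by blast+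
  have cP: "col ?P = None" using undecided by (simp add: receive_col)
  have cd: "col (decide k (i=0) (i+1=n) ?P) = Some c" using decided unfolding E_Suc step_col .
  have nl_None: "nl (E r i) = None \<and> nl (E (Suc r) i) = None" if "nl ?P = None"
    using that unfolding E_Suc step_fields by (auto simp: receive_fields split: if_splits)
  have nr_None: "nr (E r i) = None \<and> nr (E (Suc r) i) = None" if "nr ?P = None"
    using that unfolding E_Suc step_fields by (auto simp: receive_fields split: if_splits)
  have clock: "mid ?P = Some (wake_time i s) \<and> tm ?P = Some (Suc r) \<and> fromL ?P = (s < i)"
    if "nl ?P \<noteq> None \<or> nr ?P \<noteq> None"
    using that inv_asleep inv_clock cP unfolding inv_asleep_def inv_clock_def by auto
  from decide_new_colour[OF cP cd] i show ?thesis
  proof (elim disjE exE conjE)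
    fix x y assume "nl ?P = Some x" "nr ?P = Some y" "c = ribbon_color (x + y + 1) k x"
    then show ?thesis using inv_nl inv_nr i unfolding inv_nl_def inv_nr_def by auto
  next
    fix x m t assume a: "nl ?P = Some x" "nr ?P = None" "mid ?P = Some m" "tm ?P = Some t" "c = 1"
      "if fromL ?P then 2 * (k - 1) * x + m \<le> t else 2 * (k - 1) * x \<le> t + m"
    have "x = i" using inv_nl a(1) unfolding inv_nl_def by auto
    then have "2 * k * i \<le> Suc r + s + i"
      using a clock early_left_cond_iff[OF k_pos, of s i t] by auto
    then show ?thesis using nr_None a(2,5) by simp
  next
    fix y m t assume a: "nl ?P = None" "nr ?P = Some y" "mid ?P = Some m" "tm ?P = Some t" "c = k"
      "if fromL ?P then 2 * (k - 1) * y \<le> t + m else 2 * (k - 1) * y + m \<le> t"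
    have "y = n - 1 - i" using inv_nr a(2) unfolding inv_nr_def by auto
    then have "2 * k * (n-1-i) \<le> Suc r + (n-1-s) + (n-1-i)"
      using a clock early_right_cond_iff[OF k_pos _ start_in_line, of i t] i by auto
    then show ?thesis using nl_None a(1,5) by simp
  qed (use i in auto)
qed

lemma col_E_correct: "i < n \<Longrightarrow> col (E r i) = Some c \<Longrightarrow> c = rc i"
proof (induction r arbitrary: i c rule: less_induct)
  case (less r)
  consider "i = 0" | "i + 1 = n" "i \<noteq> 0" | "0 < i" "i + 1 < n" using less.prems(1) by linarith
  then show ?case
  proof cases
    case 1
    then show ?thesis using E_left_end_colour[OF less.prems(1), of r] less.prems
      ribbon_color_first by simp
  next
    case 2
    then have "i = n - 1" "2 \<le> n" by auto
    then show ?thesis using E_right_end_colour[OF less.prems(1), of r] less.prems ribbon_color_last 2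
      by simp
  next
    case interior: 3
    have "lwave_time s i \<le> r \<or> rwave_time n s i \<le> r"
      using E_interior_decision[OF less.prems(1), of r] less.prems interior by auto
    then have "r \<noteq> 0" using interior unfolding lwave_time_def rwave_time_def by auto
    then obtain r0 where r: "r = Suc r0" using not0_implies_Suc by blast
    have IH: "c = rc j" if "r' \<le> r0" "j < n" "col (E r' j) = Some c" for r' j c
      using less.IH[of r' j c] that r by simp
    show ?thesis
    proof (cases "col (E r0 i)")
      case (Some c0)
      then show ?thesis using col_E_Suc_decided[of r0 i] IH[OF le_refl less.prems(1)] less.prems(2) r
        by simp
    next
      case None
      then show ?thesis using new_colour_E[OF interior None less.prems(2)[unfolded r]]
        early_colour_1_correct[OF interior IH None] early_colour_k_correct[OF interior IH None]
        by auto
    qed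
  qed
qed

section \<open>Termination\<close>

lemma undecided_E:
  assumes i: "0 < i" "i + 1 < n" and c: "col (E r i) = None" and aw: "awake (E r i)"
  shows "mid (E r i) = Some (wake_time i s)" "tm (E r i) = Some r" "fromL (E r i) = (s < i)"
    "col (decide k False False (E r i)) = None" "nl (E r i) = None \<or> nr (E r i) = None"
proof -
  have ii: "i < n" using i by simp
  show "mid (E r i) = Some (wake_time i s)" "tm (E r i) = Some r" "fromL (E r i) = (s < i)"
    using E_undecided_clock[OF ii, of r] c aw by auto
  have "decide k (i=0) (i+1=n) (E r i) = E r i" using E_decide_idle[OF ii, of r] c aw by auto
  moreover have "(i = 0) = False" "(i + 1 = n) = False" using i by auto
  ultimately show "col (decide k False False (E r i)) = None" using c by simp
  show "nl (E r i) = None \<or> nr (E r i) = None" using E_undecided_one_count[OF ii, of r] c by auto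
qed

lemma decided_after_left_wave:
  assumes i: "0 < i" "i + 1 < n" and nl0: "nl (E (lwave_time s i) i) = Some i"
    and r: "lwave_time s i \<le> r"
    and cond: "2 * k * i \<le> r + s + i"
  shows "col (E r i) \<noteq> None"
proof
  assume c: "col (E r i) = None"
  have ii: "i < n" using i by simp
  have nl: "nl (E r i) = Some i" using nl_E_stable[OF ii r c nl0] .
  have aw: "awake (E r i)" using E_asleep[OF ii, of r] nl by auto
  note u = undecided_E[OF i c aw]
  have nr: "nr (E r i) = None" using u(5) nl by simp
  have "\<not> (if fromL (E r i) then 2 * (k - 1) * i + wake_time i s \<le> r else 2 * (k - 1) * i \<le> r
      + wake_time i s)"
    using decide_undecided_left_cond[OF c nl nr u(1) u(2) u(4)] .
  thus False using early_left_cond_iff[OF k_pos, of s i r] cond u(3) by simp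
qed

lemma decided_after_right_wave:
  assumes i: "0 < i" "i + 1 < n" and nr0: "nr (E (rwave_time n s i) i) = Some (n-1-i)"
    and r: "rwave_time n s i \<le> r"
    and cond: "2 * k * (n-1-i) \<le> r + (n-1-s) + (n-1-i)"
  shows "col (E r i) \<noteq> None"
proof
  assume c: "col (E r i) = None"
  have ii: "i < n" using i by simp
  have nr: "nr (E r i) = Some (n-1-i)" using nr_E_stable[OF ii r c nr0] .
  have aw: "awake (E r i)" using E_asleep[OF ii, of r] nr by auto
  note u = undecided_E[OF i c aw]
  have nl: "nl (E r i) = None" using u(5) nr by simp
  have "\<not> (if fromL (E r i) then 2 * (k - 1) * (n-1-i) \<le> r + wake_time i s
      else 2 * (k - 1) * (n-1-i) + wake_time i s \<le> r)"
    using decide_undecided_right_cond[OF c nl nr u(1) u(2) u(4)] .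
  thus False using early_right_cond_iff[OF k_pos ii start_in_line, of r] cond u(3) by simp
qed

lemma decided_after_both_waves:
  assumes i: "0 < i" "i + 1 < n" and nl0: "nl (E (lwave_time s i) i) = Some i"
    and nr0: "nr (E (rwave_time n s i) i) = Some (n-1-i)"
    and r: "lwave_time s i \<le> r" "rwave_time n s i \<le> r"
  shows "col (E r i) \<noteq> None"
proof
  assume c: "col (E r i) = None"
  have ii: "i < n" using i by simp
  have nl: "nl (E r i) = Some i" using nl_E_stable[OF ii r(1) c nl0] .
  have nr: "nr (E r i) = Some (n-1-i)" using nr_E_stable[OF ii r(2) c nr0] .
  show False using E_undecided_one_count[OF ii, of r] c nl nr by auto
qed

lemma endpoint_decided:
  assumes "i = 0 \<or> i + 1 = n" "i < n" "wake_time i s \<le> r"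
  shows "col (E r i) \<noteq> None"
  using E_awake_iff[OF assms(2), of r] E_ends_decided[OF assms(2), of r] assms by auto

lemma fl_nl: "i < n \<Longrightarrow> fl (E r i) \<Longrightarrow> nl (E r i) = Some i" using E_fl by auto
lemma fr_nr: "i < n \<Longrightarrow> fr (E r i) \<Longrightarrow> nr (E r i) = Some (n-1-i)" using E_fr by auto

definition decision_round where "decision_round = 2 * n - 1 - n div k"

lemma decision_round_ge: "n - 1 \<le> decision_round" unfolding decision_round_def using div_le_dividend[of n k] by linarith

lemma decision_round_arith:
  assumes k2: "2 \<le> k" and x: "x < ribbon_size n k 1"
  shows "n - 1 + x \<le> decision_round" "2 * k * x \<le> decision_round + x"
proof -
  obtain q m where qm: "q = n div k" "m = n mod k" by simp
  have nq: "n = k * q + m" using qm by simp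
  have mk: "m < k" using k_pos qm by simp
  have size_first: "ribbon_size n k 1 = q + (if 1 \<le> m then 1 else 0)"
    using ribbon_size_first[OF k_pos] qm by simp
  have round: "decision_round = 2 * n - 1 - q" unfolding decision_round_def qm ..
  have kq: "2 * q \<le> k * q" using k2 by (intro mult_le_mono1) simp
  have xq: "x \<le> q" using x size_first by (cases "1 \<le> m") auto
  show "n - 1 + x \<le> decision_round" unfolding round using xq kq nq mk by linarith
  have e1: "2 * k * x = (2 * k - 1) * x + x" using k_pos by (cases k) (simp_all add: algebra_simps)
  show "2 * k * x \<le> decision_round + x"
  proof (cases "1 \<le> m")
    case True
    have "(2 * k - 1) * x \<le> (2 * k - 1) * q" using xq by (intro mult_le_mono2)
    moreover have "(2 * k - 1) * q + q = 2 * (k * q)" using k_pos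
      by (cases k) (simp_all add: algebra_simps)
    ultimately show ?thesis unfolding round e1 using nq True by linarith
  next
    case False
    hence m0: "m = 0" by simp
    have "x + 1 \<le> q" using x size_first m0 by simp
    then have "(2 * k - 1) * (x + 1) \<le> (2 * k - 1) * q" by (intro mult_le_mono2)
    moreover have "(2 * k - 1) * (x + 1) = (2 * k - 1) * x + (2 * k - 1)"
      by (simp only: distrib_left mult_1_right)
    moreover have "(2 * k - 1) * q + q = 2 * (k * q)" using k_pos
      by (cases k) (simp_all add: algebra_simps)
    ultimately show ?thesis unfolding round e1 using nq m0 k_pos by linarith
  qed
qed

lemma ribbon_sizes_order:
  assumes k2: "2 \<le> k"
  shows "n div k \<le> ribbon_size n k k" "ribbon_size n k k \<le> ribbon_size n k 1" "n div k \<le>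
      ribbon_size n k 1"
  using ribbon_size_first[OF k_pos, of n] ribbon_size_last[OF k2, of n] by auto

lemma interior_decided_single_colour:
  assumes k: "k = 1" and i: "0 < i" "i + 1 < n"
  shows "col (E decision_round i) \<noteq> None"
proof -
  have round: "decision_round = n - 1" unfolding decision_round_def using k by simp
  have sum: "lwave_time s i + rwave_time n s i = 2 * n - 2"
    using wave_times_sum[of i] i unfolding lwave_time_def by simp
  show ?thesis
  proof (cases "lwave_time s i \<le> rwave_time n s i")
    case True
    then have "nl (E (lwave_time s i) i) = Some i" using left_wave_arrives_first fl_nl i by simp
    moreover have "lwave_time s i \<le> decision_round" using True sum round by linarith
    ultimately show ?thesis using decided_after_left_wave[OF i] k round i
      unfolding lwave_time_def by simp
  next
    case False
    then have "nr (E (rwave_time n s i) i) = Some (n-1-i)"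
      using right_wave_arrives_first fr_nr i by simp
    moreover have "rwave_time n s i \<le> decision_round" using False sum round by linarith
    ultimately show ?thesis using decided_after_right_wave[OF i] k round by simp
  qed
qed

lemma early_colour_k_left:
  assumes "0 < j" "j < n" "col (E (lwave_time s j - 1) j) \<noteq> None"
  shows "rc j = k"
proof -
  obtain c where c: "col (E (lwave_time s j - 1) j) = Some c" using assms by auto
  then show ?thesis using col_before_left_wave[OF assms(1,2) c] col_E_correct[OF assms(2) c] by simp
qed

lemma early_colour_1_right:
  assumes "j + 1 < n" "col (E (rwave_time n s j - 1) j) \<noteq> None"
  shows "rc j = 1"
proof -
  obtain c where c: "col (E (rwave_time n s j - 1) j) = Some c" using assms by auto
  moreover have "j < n" using assms by simp
  ultimately show ?thesis using col_before_right_wave[OF assms(1) c] col_E_correct by simp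
qed

lemma left_wave_or_colour_k:
  assumes i: "0 < i" "i + 1 < n"
  shows "fl (E (lwave_time s i) i) \<or> rc i = k"
proof -
  have ii: "i < n" using i by simp
  have "fl (E (lwave_time s i) i) \<or> (\<exists>j'. 0 < j' \<and> j' \<le> i
      \<and> col (E (lwave_time s j' - 1) j') \<noteq> None)" using left_wave_arrives[OF i(2)] .
  moreover
  { fix j' assume j': "0 < j'" "j' \<le> i" "col (E (lwave_time s j' - 1) j') \<noteq> None"
    hence "rc j' = k" using early_colour_k_left[of j'] ii by simp
    moreover have "rc j' \<le> rc i" using ribbon_color_mono[OF k_pos, of j' i n] j' ii by simp
    moreover have "rc i \<le> k" using ribbon_color_bounds[OF k_pos ii] by simp
    ultimately have "rc i = k" by simp }
  ultimately show ?thesis by blast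
qed

lemma right_wave_or_colour_1:
  assumes i: "0 < i" "i + 1 < n"
  shows "fr (E (rwave_time n s i) i) \<or> rc i = 1"
proof -
  have ii: "i < n" using i by simp
  have "fr (E (rwave_time n s i) i) \<or> (\<exists>j'. i \<le> j' \<and> j' + 1 < n
      \<and> col (E (rwave_time n s j' - 1) j') \<noteq> None)" using right_wave_arrives[OF i(1) ii] .
  moreover
  { fix j' assume j': "i \<le> j'" "j' + 1 < n" "col (E (rwave_time n s j' - 1) j') \<noteq> None"
    hence "rc j' = 1" using early_colour_1_right[of j'] by simp
    moreover have "rc i \<le> rc j'" using ribbon_color_mono[OF k_pos, of i j' n] j' by simp
    moreover have "1 \<le> rc i" using ribbon_color_bounds[OF k_pos ii] by simp
    ultimately have "rc i = 1" by simp }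
  ultimately show ?thesis by blast
qed

lemma interior_decided:
  assumes k2: "2 \<le> k" and i: "0 < i" "i + 1 < n"
  shows "col (E decision_round i) \<noteq> None"
proof -
  have ii: "i < n" using i by simp
  have sz: "n div k \<le> ribbon_size n k k" "ribbon_size n k k \<le> ribbon_size n k 1" "n div k \<le>
      ribbon_size n k 1"
    using ribbon_sizes_order[OF k2] .
  have R: "decision_round = 2 * n - 1 - n div k" unfolding decision_round_def ..
  have fk: "fl (E (lwave_time s i) i) \<or> rc i = k" and f1: "fr (E (rwave_time n s i) i) \<or> rc i = 1"
    using left_wave_or_colour_k[OF i] right_wave_or_colour_1[OF i] by auto
  show ?thesis
  proof (cases "rc i = 1")
    case True
    have x: "i < ribbon_size n k 1" using ribbon_color_eq_1_iff[OF k_pos ii] True by simp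
    note A = decision_round_arith[OF k2 x]
    have "rc i \<noteq> k" using True k2 by simp
    hence "fl (E (lwave_time s i) i)" using fk by simp
    hence "nl (E (lwave_time s i) i) = Some i" using fl_nl ii by simp
    moreover have "lwave_time s i \<le> decision_round" using A start_in_line unfolding lwave_time_def
      by linarith
    moreover have "2 * k * i \<le> decision_round + s + i" using A by linarith
    ultimately show ?thesis using decided_after_left_wave[OF i] by simp
  next
    case not_1: False
    show ?thesis
    proof (cases "rc i = k")
      case True
      have "n - ribbon_size n k k \<le> i" using ribbon_color_eq_k_iff[OF k_pos ii] True by simp
      hence x: "n - 1 - i < ribbon_size n k 1" using sz ii by linarith
      note A = decision_round_arith[OF k2 x]
      have "fr (E (rwave_time n s i) i)" using f1 not_1 by simp
      hence "nr (E (rwave_time n s i) i) = Some (n-1-i)" using fr_nr ii by simp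
      moreover have "rwave_time n s i \<le> decision_round" using A start_in_line
        unfolding rwave_time_def by linarith
      moreover have "2 * k * (n-1-i) \<le> decision_round + (n-1-s) + (n-1-i)" using A by linarith
      ultimately show ?thesis using decided_after_right_wave[OF i] by simp
    next
      case nk: False
      have "fl (E (lwave_time s i) i)" "fr (E (rwave_time n s i) i)" using fk f1 not_1 nk by auto
      hence a: "nl (E (lwave_time s i) i) = Some i" "nr (E (rwave_time n s i) i) = Some (n-1-i)"
        using fl_nl fr_nr ii by auto
      have b1: "ribbon_size n k 1 \<le> i" using ribbon_color_eq_1_iff[OF k_pos ii] not_1 by simp
      have b2: "i < n - ribbon_size n k k" using ribbon_color_eq_k_iff[OF k_pos ii] nk by simp
      have "lwave_time s i \<le> decision_round" "rwave_time n s i \<le> decision_round"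
        using b1 b2 sz start_in_line ii unfolding R lwave_time_def rwave_time_def by linarith+
      thus ?thesis using decided_after_both_waves[OF i a] by simp
    qed
  qed
qed

lemma all_decided: "i < n \<Longrightarrow> col (E decision_round i) \<noteq> None"
proof -
  assume ii: "i < n"
  show ?thesis
  proof (cases "i = 0 \<or> i + 1 = n")
    case True
    have "wake_time i s \<le> n - 1" using ii start_in_line unfolding wake_time_def by auto
    hence "wake_time i s \<le> decision_round" using decision_round_ge by linarith
    thus ?thesis using endpoint_decided[OF True ii] by simp
  next
    case False
    hence i: "0 < i" "i + 1 < n" using ii by auto
    show ?thesis
    proof (cases "k = 1")
      case True thus ?thesis using interior_decided_single_colour[OF True i] by simp
    next
      case False hence "2 \<le> k" using k_pos by simp
      thus ?thesis using interior_decided[OF _ i] by simp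
    qed
  qed
qed

lemma undecided_before_decision_round: "i < n \<Longrightarrow> col (E r i) = None \<Longrightarrow> r < decision_round"
proof (rule ccontr)
  assume a: "i < n" "col (E r i) = None" "\<not> r < decision_round"
  hence "decision_round \<le> r" by simp
  hence "col (E r i) = col (E decision_round i)" by (rule col_E_stable[OF all_decided[OF a(1)]])
  thus False using a all_decided[OF a(1)] by simp
qed

lemma decision_round_bound: "real decision_round \<le> (2 - 1 / real k) * real n + real k"
proof -
  have kp: "0 < real k" using k_pos by simp
  have e0: "k * (n div k) + n mod k = n" by (rule mult_div_mod_eq)
  have "real (k * (n div k) + n mod k) = real n" using e0 by simp
  hence e: "real k * real (n div k) + real (n mod k) = real n" by (simp only: of_nat_add of_nat_mult)
  have "real (n mod k) < real k" using k_pos by simp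
  hence "real n < real k * (real (n div k) + 1)" using e by (simp add: algebra_simps)
  hence "real n / real k < real (n div k) + 1" using kp by (simp add: field_simps)
  moreover have "decision_round \<le> 2 * n - n div k" unfolding decision_round_def by simp
  moreover have "real (2 * n - n div k) = 2 * real n - real (n div k)"
  proof -
    have "n div k \<le> 2 * n" using div_le_dividend[of n k] by linarith
    hence "real (2 * n - n div k) = real (2 * n) - real (n div k)" by (rule of_nat_diff)
    thus ?thesis by simp
  qed
  ultimately have "real decision_round \<le> 2 * real n - real n / real k + 1"
  proof -
    assume h1: "real n / real k < real (n div k) + 1" and h2: "decision_round \<le> 2 * n - n div k"
      and h3: "real (2 * n - n div k) = 2 * real n - real (n div k)"
    have "real decision_round \<le> real (2 * n - n div k)" using h2 by (simp only: of_nat_le_iff)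
    thus ?thesis using h1 h3 by linarith
  qed
  moreover have "(2 - 1 / real k) * real n = 2 * real n - real n / real k"
    by (simp add: algebra_simps)
  ultimately show ?thesis using k_pos by simp
qed

section \<open>Message complexity\<close>

lemma fl_E_Suc_undecided: "0 < i \<Longrightarrow> fl (E (Suc t) i) \<Longrightarrow> col (E t i) = None"
  unfolding E_Suc step_fields receive_fields by (auto split: if_split_asm)

lemma fr_E_Suc_undecided: "i + 1 < n \<Longrightarrow> fr (E (Suc t) i) \<Longrightarrow> col (E t i) = None"
  unfolding E_Suc step_fields receive_fields by (auto split: if_split_asm)

lemma single_colour_fl_left:
  assumes k: "k = 1" and i: "i + 1 < n" and f: "fl (E r i)"
  shows "i + s \<le> n - 1"
proof (rule ccontr)
  assume far: "\<not> i + s \<le> n - 1"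
  then have i0: "0 < i" using start_in_line by auto
  have r: "r = lwave_time s i" using E_fl[of i r] i f by auto
  define t where "t = lwave_time s i - 1"
  have t: "lwave_time s i = Suc t" using i0 unfolding t_def lwave_time_def by simp
  have undecided: "col (E t i) = None" using fl_E_Suc_undecided[OF i0] f r t by simp
  have earlier: "rwave_time n s i \<le> t" using far t wave_times_sum[of i] i unfolding lwave_time_def
    by linarith
  have "fr (E (rwave_time n s i) i)" using right_wave_arrives_first[OF i0] earlier t i by simp
  then have "col (E (rwave_time n s i) i) \<noteq> None"
    using decided_after_right_wave[OF i0 i] fr_nr k i unfolding rwave_time_def by simp
  then show False using col_E_stable[OF _ earlier] undecided by simp
qed

lemma single_colour_fr_right:
  assumes k: "k = 1" and i: "0 < i" "i < n" and f: "fr (E r i)"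
  shows "n - 1 \<le> i + s"
proof (rule ccontr)
  assume far: "\<not> n - 1 \<le> i + s"
  then have i1: "i + 1 < n" by auto
  have r: "r = rwave_time n s i" using E_fr[of i r] i f by auto
  define t where "t = rwave_time n s i - 1"
  have t: "rwave_time n s i = Suc t" using i1 unfolding t_def rwave_time_def by simp
  have undecided: "col (E t i) = None" using fr_E_Suc_undecided[OF i1] f r t by simp
  have earlier: "lwave_time s i \<le> t" using far t wave_times_sum[of i] i unfolding lwave_time_def
    by linarith
  have "fl (E (lwave_time s i) i)" using left_wave_arrives_first[OF i1] earlier t by simp
  then have "col (E (lwave_time s i) i) \<noteq> None"
    using decided_after_left_wave[OF i(1) i1] fl_nl k i unfolding lwave_time_def by simp
  then show False using col_E_stable[OF _ earlier] undecided by simp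
qed

text \<open>For \<open>k = 1\<close> an agent decides as soon as it receives a count, so only the count of the
  nearer endpoint ever passes it.\<close>

definition fl_possible where "fl_possible i = (k = 1 \<longrightarrow> i + s \<le> n - 1)"
definition fr_possible where "fr_possible i = (k = 1 \<longrightarrow> n - 1 \<le> i + s)"
definition bit_budget where "bit_budget i = (if 0 < i \<and> i \<le> s then bitlen (Suc (wake_time i s))
    else 0) + (if 0 < i \<and> fr_possible i then bitlen (n - i) else 0)
   + (if s \<le> i \<and> i + 1 < n then bitlen (Suc (wake_time i s)) else 0) + (if i + 1 < n
     \<and> fl_possible i then bitlen (Suc i) else 0)"
definition agent_bits where "agent_bits r i = (if 0 < i then msg_bits (send_left (E r i)) else 0)
    + (if i + 1 < n then msg_bits (send_right (E r i)) else 0)"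

lemma agent_bits_eq:
  assumes ii: "i < n"
  shows "agent_bits r i = (if fmL (E r i) then bitlen (Suc (wake_time i s)) else 0)
      + (if fr (E r i) then bitlen (n - i) else 0)
    + ((if fmR (E r i) then bitlen (Suc (wake_time i s)) else 0) + (if fl (E r i)
      then bitlen (Suc i) else 0))"
proof -
  have a1: "fmL (E r i) \<Longrightarrow> mid (E r i) = Some (wake_time i s) \<and> 0 < i"
    using E_fmL_iff[OF ii, of r] E_fm_mid[OF ii, of r] by auto
  have a2: "fmR (E r i) \<Longrightarrow> mid (E r i) = Some (wake_time i s) \<and> i + 1 < n"
    using E_fmR_iff[OF ii, of r] E_fm_mid[OF ii, of r] by auto
  have a3: "fr (E r i) \<Longrightarrow> nr (E r i) = Some (n - 1 - i) \<and> 0 < i" using E_fr[OF ii, of r] by auto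
  have a4: "fl (E r i) \<Longrightarrow> nl (E r i) = Some i \<and> i + 1 < n" using E_fl[OF ii, of r] by auto
  have nn: "Suc (n - 1 - i) = n - i" using ii by simp
  have L: "(if 0 < i then msg_bits (send_left (E r i)) else 0) = (if fmL (E r i)
      then bitlen (Suc (wake_time i s)) else 0) + (if fr (E r i) then bitlen (n - i) else 0)"
    unfolding msg_bits_send_left using a1 a3 nn by (auto simp: opt_bits_def)
  have R: "(if i + 1 < n then msg_bits (send_right (E r i)) else 0) = (if fmR (E r i)
      then bitlen (Suc (wake_time i s)) else 0) + (if fl (E r i) then bitlen (Suc i) else 0)"
    unfolding msg_bits_send_right using a2 a4 by (auto simp: opt_bits_def)
  show ?thesis unfolding agent_bits_def L R ..
qed

lemma sum_agent_bits_le: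
  assumes ii: "i < n"
  shows "(\<Sum>r<R. agent_bits r i) \<le> bit_budget i"
proof -
  have e: "(\<Sum>r<R. agent_bits r i) = (\<Sum>r<R. if fmL (E r i) then bitlen (Suc (wake_time i s))
      else 0) + (\<Sum>r<R. if fr (E r i) then bitlen (n - i) else 0)
    + ((\<Sum>r<R. if fmR (E r i) then bitlen (Suc (wake_time i s)) else 0) + (\<Sum>r<R. if fl (E r i)
      then bitlen (Suc i) else 0))"
    unfolding agent_bits_eq[OF ii] sum.distrib ..
  have s1: "(\<Sum>r<R. if fmL (E r i) then bitlen (Suc (wake_time i s)) else 0) \<le> (if 0 < i \<and> i \<le> s
      then bitlen (Suc (wake_time i s)) else 0)"
   by (rule sum_if_at_most_once[where t="wake_time i s"]) (use E_fmL_iff[OF ii] in \<open>auto\<close>)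
  have s2: "(\<Sum>r<R. if fr (E r i) then bitlen (n - i) else 0) \<le> (if 0 < i \<and> fr_possible i
      then bitlen (n - i) else 0)"
  proof (rule sum_if_at_most_once[where t="rwave_time n s i"])
    fix r assume f: "fr (E r i)"
    have "r = rwave_time n s i \<and> 0 < i" using E_fr[OF ii, of r] f by auto
    moreover have "fr_possible i" unfolding fr_possible_def
      using single_colour_fr_right f ii \<open>r = rwave_time n s i \<and> 0 < i\<close> by blast
    ultimately show "r = rwave_time n s i \<and> 0 < i \<and> fr_possible i" by simp
  qed
  have s3: "(\<Sum>r<R. if fmR (E r i) then bitlen (Suc (wake_time i s)) else 0) \<le> (if s \<le> i \<and> i
      + 1 < n then bitlen (Suc (wake_time i s)) else 0)"
   by (rule sum_if_at_most_once[where t="wake_time i s"]) (use E_fmR_iff[OF ii] in \<open>auto\<close>)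
  have s4: "(\<Sum>r<R. if fl (E r i) then bitlen (Suc i) else 0) \<le> (if i + 1 < n \<and> fl_possible i
      then bitlen (Suc i) else 0)"
  proof (rule sum_if_at_most_once[where t="lwave_time s i"])
    fix r assume f: "fl (E r i)"
    have "r = lwave_time s i \<and> i + 1 < n" using E_fl[OF ii, of r] f by auto
    moreover have "fl_possible i" unfolding fl_possible_def
      using single_colour_fl_left f \<open>r = lwave_time s i \<and> i + 1 < n\<close> by blast
    ultimately show "r = lwave_time s i \<and> i + 1 < n \<and> fl_possible i" by simp
  qed
  show ?thesis unfolding e bit_budget_def using s1 s2 s3 s4 by linarith
qed

lemma sum_round_bits_le: "(\<Sum>r<R. round_bits n k s r) \<le> (\<Sum>i<n. bit_budget i)"
proof -
  have "(\<Sum>r<R. round_bits n k s r) = (\<Sum>r<R. \<Sum>i<n. agent_bits r i)"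
    unfolding round_bits_def agent_bits_def ..
  also have "\<dots> = (\<Sum>i<n. \<Sum>r<R. agent_bits r i)" by (rule sum.swap)
  also have "\<dots> \<le> (\<Sum>i<n. bit_budget i)" by (rule sum_mono) (rule sum_agent_bits_le, simp)
  finally show ?thesis .
qed

definition fl_count where "fl_count = (if k = 1 then min (n - 1) (n - s) else n - 1)"
definition fr_count where "fr_count = (if k = 1 then min (n - 1) (s + 1) else n - 1)"

lemma sum_budget_fmL: "(\<Sum>i<n. if 0 < i \<and> i \<le> s then bitlen (Suc (wake_time i s))
    else 0) = bitlen_sum s"
proof -
  have st: "{i \<in> {..<n}. 0 < i \<and> i \<le> s} = {(s+1) - s..<s+1}" using start_in_line by auto
  have "(\<Sum>i<n. if 0 < i \<and> i \<le> s then bitlen (Suc (wake_time i s))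
      else 0) = sum (\<lambda>i. bitlen (Suc (wake_time i s))) {(s+1) - s..<s+1}"
    unfolding sum_if_eq_sum_filter st ..
  also have "\<dots> = (\<Sum>i\<in>{(s+1) - s..<s+1}. bitlen ((s+1) - i))"
    by (rule sum.cong) (auto simp: wake_time_def Suc_diff_le)
  also have "\<dots> = bitlen_sum s" by (rule sum_bitlen_diff) simp
  finally show ?thesis .
qed

lemma sum_budget_fmR: "(\<Sum>i<n. if s \<le> i \<and> i + 1 < n then bitlen (Suc (wake_time i s))
    else 0) = bitlen_sum (n - 1 - s)"
proof -
  have st: "{i \<in> {..<n}. s \<le> i \<and> i + 1 < n} = {s..<s + (n - 1 - s)}" using start_in_line by auto
  have "(\<Sum>i<n. if s \<le> i \<and> i + 1 < n then bitlen (Suc (wake_time i s))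
      else 0) = sum (\<lambda>i. bitlen (Suc (wake_time i s))) {s..<s + (n - 1 - s)}"
    unfolding sum_if_eq_sum_filter st ..
  also have "\<dots> = (\<Sum>i\<in>{s..<s + (n - 1 - s)}. bitlen (Suc (i - s)))"
    by (rule sum.cong) (auto simp: wake_time_def)
  also have "\<dots> = bitlen_sum (n - 1 - s)" by (rule sum_bitlen_shift)
  finally show ?thesis .
qed

lemma sum_budget_fl: "(\<Sum>i<n. if i + 1 < n \<and> fl_possible i then bitlen (Suc i)
    else 0) = bitlen_sum fl_count"
proof -
  have st: "{i \<in> {..<n}. i + 1 < n \<and> fl_possible i} = {..<fl_count}"
    unfolding fl_count_def fl_possible_def using start_in_line by auto
  show ?thesis unfolding sum_if_eq_sum_filter st sum_bitlen_Suc ..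
qed

lemma sum_budget_fr: "(\<Sum>i<n. if 0 < i \<and> fr_possible i then bitlen (n - i)
    else 0) = bitlen_sum fr_count"
proof -
  have st: "{i \<in> {..<n}. 0 < i \<and> fr_possible i} = {n - fr_count..<n}"
    unfolding fr_count_def fr_possible_def using start_in_line by auto
  have "fr_count \<le> n" unfolding fr_count_def using start_in_line by (simp add: min_def)
  thus ?thesis unfolding sum_if_eq_sum_filter st by (rule sum_bitlen_diff)
qed

lemma sum_bit_budget: "(\<Sum>i<n. bit_budget i) = bitlen_sum s + bitlen_sum (n - 1 - s)
    + bitlen_sum fl_count + bitlen_sum fr_count"
proof -
  have "(\<Sum>i<n. bit_budget i) = (\<Sum>i<n. if 0 < i \<and> i \<le> s then bitlen (Suc (wake_time i s)) else 0)
      + (\<Sum>i<n. if 0 < i \<and> fr_possible i then bitlen (n - i) else 0)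
   + (\<Sum>i<n. if s \<le> i \<and> i + 1 < n then bitlen (Suc (wake_time i s)) else 0) + (\<Sum>i<n. if i + 1 < n
     \<and> fl_possible i then bitlen (Suc i) else 0)"
    unfolding bit_budget_def sum.distrib ..
  thus ?thesis unfolding sum_budget_fmL sum_budget_fmR sum_budget_fl sum_budget_fr by simp
qed

lemma total_bits_bound: "real (\<Sum>r<R. round_bits n k s r) \<le> (4 - 2 / real k) * real n * log 2 (real n)"
proof -
  have "(\<Sum>r<R. round_bits n k s r) \<le> bitlen_sum s + bitlen_sum (n - 1 - s) + bitlen_sum fl_count
      + bitlen_sum fr_count" using sum_round_bits_le sum_bit_budget by simp
  hence T: "real (\<Sum>r<R. round_bits n k s r) \<le> real (bitlen_sum s + bitlen_sum (n - 1 - s)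
      + bitlen_sum fl_count + bitlen_sum fr_count)" by (simp only: of_nat_le_iff)
  have nl: "0 \<le> real n * log 2 (real n)" using start_in_line by simp
  show ?thesis
  proof (cases "k = 1")
    case True
    have "real (bitlen_sum s + bitlen_sum (n - 1 - s) + bitlen_sum fl_count
        + bitlen_sum fr_count) \<le> 2 * real n * log 2 (real n)"
      using bitlen_sums_bound_single[OF start_in_line] True
        unfolding fl_count_def fr_count_def by simp
    thus ?thesis using T True by simp
  next
    case False
    hence k2: "2 \<le> k" using k_pos by simp
    have "bitlen_sum s + bitlen_sum (n - 1 - s) \<le> bitlen_sum (n - 1)"
      using bitlen_sum_superadd[of s "n - 1 - s"] start_in_line by simp
    moreover have "fl_count = n - 1" "fr_count = n - 1" unfolding fl_count_def fr_count_def
      using False by auto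
    ultimately have "bitlen_sum s + bitlen_sum (n - 1 - s) + bitlen_sum fl_count
        + bitlen_sum fr_count \<le> 3 * bitlen_sum (n - 1)" by simp
    hence "real (bitlen_sum s + bitlen_sum (n - 1 - s) + bitlen_sum fl_count
        + bitlen_sum fr_count) \<le> real (3 * bitlen_sum (n - 1))" by (simp only: of_nat_le_iff)
    also have "\<dots> \<le> 3 * real n * log 2 (real n)" by (rule bitlen_sums_bound_multi)
    also have "\<dots> \<le> (4 - 2 / real k) * real n * log 2 (real n)"
    proof -
      have "2 / real k \<le> 1" using k2 by (simp add: field_simps)
      hence "3 \<le> 4 - 2 / real k" by simp
      thus ?thesis using nl by (simp add: mult.assoc mult_right_mono)
    qed
    finally show ?thesis using T by linarith
  qed
qed

section \<open>Memory\<close>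

lemma decision_round_le: "decision_round \<le> 2 * n" unfolding decision_round_def by simp

lemma clock_bits_bound:
  assumes i: "i < n"
  shows "real (opt_bits (tm (E r i))) \<le> log 2 (real n) + 2"
proof (cases "tm (E r i)")
  case None
  then show ?thesis using n_pos by (simp add: opt_bits_def)
next
  case (Some t)
  have undecided: "col (E r i) = None" using E_clock_erased[OF i, of r] Some by simp
  moreover have "awake (E r i)" using E_asleep[OF i, of r] Some by auto
  ultimately have "t = r" using E_undecided_clock[OF i, of r] Some by simp
  moreover have "r < decision_round" using undecided_before_decision_round[OF i undecided] .
  ultimately have "t \<le> 2 * n" using decision_round_le by simp
  then have "real (opt_bits (tm (E r i))) \<le> log 2 (real (2 * n)) + 1" using Some n_pos
    by (intro opt_bits_le_log) auto
  also have "log 2 (real (2 * n)) = 1 + log 2 (real n)" using n_pos by (simp add: log_mult)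
  finally show ?thesis by simp
qed

lemma mem_bits_bound:
  assumes i: "i < n"
  shows "real (mem_bits (E r i)) \<le> 3 * log 2 (real n) + log 2 (real k) + 16"
proof -
  let ?st = "E r i"
  let ?L = "log 2 (real n)"
  have mid: "real (opt_bits (mid ?st)) \<le> ?L + 1"
    using E_mid[OF i, of r] i start_in_line n_pos by (intro opt_bits_le_log) (auto simp: wake_time_def)
  have nl: "real (opt_bits (nl ?st)) \<le> ?L + 1"
    using E_nl[OF i, of r] i n_pos by (intro opt_bits_le_log) auto
  have nr: "real (opt_bits (nr ?st)) \<le> ?L + 1"
    using E_nr[OF i, of r] i n_pos by (intro opt_bits_le_log) auto
  have col: "real (opt_bits (col ?st)) \<le> log 2 (real k) + 1"
  proof (rule opt_bits_le_log)
    fix c assume "col ?st = Some c"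
    then show "c \<le> k" using col_E_correct[OF i] ribbon_color_bounds[OF k_pos i] by simp
  qed (use k_pos in simp)
  have mem: "real (mem_bits ?st) = 11 + real (opt_bits (mid ?st)) + real (opt_bits (tm ?st))
      + real (opt_bits (nl ?st)) + real (opt_bits (nr ?st)) + real (opt_bits (col ?st))"
    unfolding mem_bits_def by simp
  \<comment> \<open>An undecided agent stores at most one count besides its clock; a decided one has erased
    its clock but stores its colour.\<close>
  show ?thesis
  proof (cases "col ?st")
    case None
    have "nl ?st = None \<or> nr ?st = None" using E_undecided_one_count[OF i, of r] None by simp
    then have "real (opt_bits (nl ?st)) + real (opt_bits (nr ?st)) \<le> ?L + 1"
      using nl nr by (auto simp: opt_bits_def)
    moreover have "0 \<le> log 2 (real k)" using k_pos by simp
    ultimately show ?thesis unfolding mem using None mid clock_bits_bound[OF i, of r]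
      by (simp add: opt_bits_def)
  next
    case (Some c)
    have "tm ?st = None" using E_clock_erased[OF i, of r] Some by auto
    then show ?thesis unfolding mem using mid nl nr col by (simp add: opt_bits_def)
  qed
qed

lemma ribbon_reached:
  "\<exists>R. real R \<le> (2 - 1 / real k) * real n + real k \<and> (\<forall>i<n. col (E R i) \<noteq> None)
     \<and> is_ribbon n k (\<lambda>i. the (col (E R i)))"
proof (intro exI conjI)
  show "real decision_round \<le> (2 - 1 / real k) * real n + real k" by (rule decision_round_bound)
  show "\<forall>i<n. col (E decision_round i) \<noteq> None" using all_decided by blast
  have "is_ribbon n k (\<lambda>i. the (col (E decision_round i))) = is_ribbon n k (ribbon_color n k)"
  proof (rule is_ribbon_cong)
    fix i assume i: "i < n"
    then obtain c where c: "col (E decision_round i) = Some c" using all_decided by blast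
    then show "the (col (E decision_round i)) = ribbon_color n k i"
      using col_E_correct[OF i c] by simp
  qed
  then show "is_ribbon n k (\<lambda>i. the (col (E decision_round i)))"
    using is_ribbon_ribbon_color[OF k_pos] by simp
qed

end

theorem theorem3:
  "\<exists>C::real. \<forall>n k s. 1 \<le> k \<longrightarrow> s < n \<longrightarrow>
     (\<exists>R. real R \<le> (2 - 1 / real k) * real n + real k \<and>
          (\<forall>i<n. col (exec n k s R i) \<noteq> None) \<and>
          is_ribbon n k (\<lambda>i. the (col (exec n k s R i)))) \<and>
     (\<forall>r r' i. i < n \<longrightarrow> r \<le> r' \<longrightarrow> col (exec n k s r i) \<noteq> None \<longrightarrow>
          col (exec n k s r' i) = col (exec n k s r i)) \<and>
     (\<forall>R. real (\<Sum>r<R. round_bits n k s r) \<le> (4 - 2 / real k) * real n * log 2 (real n)) \<and>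
     (\<forall>r i. i < n \<longrightarrow> real (mem_bits (exec n k s r i)) \<le> 3 * log 2 (real n) + log 2 (real k) + C)"
proof (intro exI[of _ 16] allI impI, goal_cases)
  case (1 n k s)
  then interpret exact_count n k s by unfold_locales
  show ?case
    by (intro conjI allI impI ribbon_reached col_E_stable total_bits_bound mem_bits_bound)
qed

end
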